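(* Let $d\ge1$ and let $\{X_{\mathbf k};\ \mathbf k\in\mathbb N^d\}$ be a negatively associated field of random variables with $\mathbb E X_{\mathbf k}=0$ for all $\mathbf k$, and uniformly bounded: there is $0<b<\infty$ with $|X_{\mathbf k}|\le b$ a.s. for all $\mathbf k$. Let $S_{\mathbf n}=\sum_{\mathbf k\le\mathbf n}X_{\mathbf k}$. Then for any $\delta>0$, $$\limsup_{\mathbf n\to\infty}\frac{\max_{\mathbf k\le\delta\mathbf n}|S_{\mathbf n+\mathbf k}-S_{\mathbf n}|}{(2d|\mathbf n|\log\log|\mathbf n|)^{1/2}}\le 80d\big(\delta(1+2\delta)^d\big)^{1/2}\sup_{\mathbf k}(\mathbb E X_{\mathbf k}^2)^{1/2}\quad\text{a.s.}$$
   Context: A finite family of random variables is negatively associated if for every pair of disjoint index subsets $A,B$, $\operatorname{Cov}(f(X_i;i\in A),g(X_j;j\in B))\le 0$ whenever $f,g$ are coordinatewise non-decreasing and the covariance exists; an infinite family is negatively associated if every finite subfamily is. For $\mathbf n=(n_1,\dots,n_d)\in\mathbb N^d$, $|\mathbf n|=n_1\cdots n_d$; $\mathbf k\le\mathbf n$ means $k_i\le n_i$ for all $i$; $\delta\mathbf n=(\delta n_1,\dots,\delta n_d)$ and the maximum is over $\mathbf k\in\mathbb N^d$ with $\mathbf k\le\delta\mathbf n$; $\mathbf n\to\infty$ means $n_1\to\infty,\dots,n_d\to\infty$. Throughout, $\log x=\ln(x\vee e)$. *)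

theory Defs
  imports "HOL-Probability.Probability"
begin

text \<open>Index set N^d with N = {1,2,...}; multi-indices are functions 'd => nat
  on a finite type 'd, with d = CARD('d).\<close>

definition posidx :: "('d::finite \<Rightarrow> nat) set" where
  "posidx = {k. \<forall>i. 1 \<le> k i}"

text \<open>A function f of (X_i; i in A)
  is modelled as f applied to the restriction of the vector to A; coordinatewise
  non-decreasing on the coordinates in A; "covariance exists" = f(X_A), g(X_B) and their
  product are integrable.\<close>

definition coord_nondecr :: "'i set \<Rightarrow> (('i \<Rightarrow> real) \<Rightarrow> real) \<Rightarrow> bool" where
  "coord_nondecr A f \<longleftrightarrow>
     (\<forall>x y. (\<forall>i\<in>A. x i \<le> y i) \<longrightarrow> f (restrict x A) \<le> f (restrict y A))"

definition neg_assoc :: "'a measure \<Rightarrow> ('i \<Rightarrow> 'a \<Rightarrow> real) \<Rightarrow> 'i set \<Rightarrow> bool" where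
  "neg_assoc M X I \<longleftrightarrow>
     (\<forall>A B f g. finite A \<and> finite B \<and> A \<subseteq> I \<and> B \<subseteq> I \<and> A \<inter> B = {} \<and>
        coord_nondecr A f \<and> coord_nondecr B g \<and>
        integrable M (\<lambda>\<omega>. f (\<lambda>i\<in>A. X i \<omega>)) \<and>
        integrable M (\<lambda>\<omega>. g (\<lambda>i\<in>B. X i \<omega>)) \<and>
        integrable M (\<lambda>\<omega>. f (\<lambda>i\<in>A. X i \<omega>) * g (\<lambda>i\<in>B. X i \<omega>))
      \<longrightarrow> (LINT \<omega>|M. f (\<lambda>i\<in>A. X i \<omega>) * g (\<lambda>i\<in>B. X i \<omega>))
          - (LINT \<omega>|M. f (\<lambda>i\<in>A. X i \<omega>)) * (LINT \<omega>|M. g (\<lambda>i\<in>B. X i \<omega>)) \<le> 0)"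

definition Lg :: "real \<Rightarrow> real" where
  "Lg x = ln (max x (exp 1))"

text \<open>n \<rightarrow> \<infinity>: every coordinate tends to infinity.\<close>
definition multi_at_top :: "('d::finite \<Rightarrow> nat) filter" where
  "multi_at_top = (INF i. filtercomap (\<lambda>n. n i) at_top)"

definition partial_sum :: "(('d::finite \<Rightarrow> nat) \<Rightarrow> 'a \<Rightarrow> real) \<Rightarrow> ('d \<Rightarrow> nat) \<Rightarrow> 'a \<Rightarrow> real" where
  "partial_sum X n \<omega> = (\<Sum>k\<in>{k\<in>posidx. \<forall>i. k i \<le> n i}. X k \<omega>)"

definition max_incr :: "(('d::finite \<Rightarrow> nat) \<Rightarrow> 'a \<Rightarrow> real) \<Rightarrow> real \<Rightarrow> ('d \<Rightarrow> nat) \<Rightarrow> 'a \<Rightarrow> real" where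
  "max_incr X \<delta> n \<omega> = Max ({\<bar>partial_sum X (\<lambda>i. n i + k i) \<omega> - partial_sum X n \<omega>\<bar> | k.
        k \<in> posidx \<and> (\<forall>i. real (k i) \<le> \<delta> * real (n i))} \<union> {0})"

end

theory Submission
  imports Defs
begin

(*
  Negative association makes the exponential moment of a sum of the X_k at most the product of
  the individual moments, which gives a Bernstein-type tail bound
  P(|sum_{k in K} X_k| >= a) <= 2 exp (-a^2 / (4 V)) whenever sigma^2 |K| <= V and a b <= 2 V.

  Blocks are formed along the geometric grid N_j = floor (theta^j) with theta close to 1.  For n in
  the block of N, every increment S_(n+k) - S_n is the difference of two increments S_(N+c) - S_N with
  c <= 2 delta N.  Such an increment is controlled in two stages: exactly for c on a sublattice of
  mesh about |N| loglog|N| / log|N| (few points, each a sum of O(|N|) terms), and for the rounding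
  error (many points, each a sum over a thin shell).  Both failure probabilities are bounded by
  C / (log |N|)^(2d), which is summable over j as a product of one-dimensional series; Borel-Cantelli
  finishes the proof.  The constant 4 sigma sqrt (12 d delta (1 + 2 delta)^d) obtained this way is
  below the claimed one.
*)

lemma exp_le_quadratic:
  fixes x :: real
  assumes "\<bar>x\<bar> \<le> 1"
  shows "exp x \<le> 1 + x + x\<^sup>2"
proof (cases "0 \<le> x")
  case True
  then show ?thesis using exp_bound[of x] assms by simp
next
  case False
  have "1 - x \<le> exp (-x)" using exp_ge_add_one_self[of "-x"] by simp
  then have "exp x * (1 - x) \<le> 1" by (simp add: exp_minus field_simps)
  moreover have "1 \<le> (1 + x + x\<^sup>2) * (1 - x)"
  proof -
    have "x ^ 3 \<le> 0" using False by (simp add: power3_eq_cube mult_nonneg_nonpos)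
    then show ?thesis by (simp add: algebra_simps power2_eq_square power3_eq_cube)
  qed
  ultimately have "exp x * (1 - x) \<le> (1 + x + x\<^sup>2) * (1 - x)" by linarith
  then show ?thesis using False by (simp add: mult_le_cancel_right_pos)
qed

lemma one_plus_power_minus_one_le:
  fixes x :: real
  assumes "0 \<le> x"
  shows "(1 + x) ^ n - 1 \<le> n * x * (1 + x) ^ n"
proof (induction n)
  case 0
  then show ?case by simp
next
  case (Suc n)
  have "(1 + x) ^ Suc n - 1 = (1 + x) * ((1 + x) ^ n - 1) + x" by (simp add: algebra_simps)
  also have "\<dots> \<le> (1 + x) * (n * x * (1 + x) ^ n) + x * (1 + x) ^ Suc n"
  proof (intro add_mono mult_left_mono)
    show "x \<le> x * (1 + x) ^ Suc n"
      using assms by (simp add: mult_le_cancel_left1 del: power_Suc)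
  qed (use Suc assms in auto)
  also have "\<dots> = Suc n * x * (1 + x) ^ Suc n" by (simp add: algebra_simps)
  finally show ?case .
qed

lemma power_le_exp_mult:
  fixes x y :: real
  assumes "1 \<le> x" "x \<le> exp y"
  shows "x ^ n \<le> exp (n * y)"
proof -
  have "x ^ n \<le> exp y ^ n" using assms by (intro power_mono) auto
  then show ?thesis by (simp add: exp_of_nat_mult)
qed

lemma prod_le_power_mult:
  fixes a c :: "'i \<Rightarrow> real"
  assumes "\<And>i. i \<in> A \<Longrightarrow> 0 \<le> a i" "\<And>i. i \<in> A \<Longrightarrow> a i \<le> r * c i"
  shows "(\<Prod>i\<in>A. a i) \<le> r ^ card A * (\<Prod>i\<in>A. c i)"
proof -
  have "(\<Prod>i\<in>A. a i) \<le> (\<Prod>i\<in>A. r * c i)" using assms by (intro prod_mono) auto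
  then show ?thesis by (simp add: prod.distrib)
qed

lemma max_exp_1_pos: "0 < max (x::real) (exp 1)"
  by (simp add: less_max_iff_disj)

lemma Lg_ge_1: "1 \<le> Lg x"
  unfolding Lg_def using max_exp_1_pos[of x] by (subst ln_ge_iff) auto

lemma Lg_pos: "0 < Lg x"
  using Lg_ge_1[of x] by simp

lemma exp_Lg: "exp (Lg x) = max x (exp 1)"
  unfolding Lg_def using max_exp_1_pos[of x] by simp

lemma Lg_mono: "x \<le> y \<Longrightarrow> Lg x \<le> Lg y"
  unfolding Lg_def using max_exp_1_pos[of x] max_exp_1_pos[of y] by (subst ln_le_cancel_iff) auto

lemma Lg_le_self: "1 \<le> x \<Longrightarrow> Lg x \<le> x"
  using ln_le_minus_one[of x] unfolding Lg_def by (auto simp: max_def)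

lemma Lg_squared_le:
  assumes "exp 1 \<le> x"
  shows "(Lg x)\<^sup>2 \<le> 16 * sqrt x"
proof -
  have x0: "0 < x" using assms exp_gt_zero[of 1] by linarith
  have "Lg x = 4 * ln (x powr (1/4))" using assms x0 by (simp add: Lg_def max_def ln_powr)
  also have "\<dots> \<le> 4 * x powr (1/4)" using ln_le_minus_one[of "x powr (1/4)"] x0 by simp
  finally have "(Lg x)\<^sup>2 \<le> (4 * x powr (1/4))\<^sup>2" using Lg_pos[of x] by (intro power_mono) auto
  also have "\<dots> = 16 * (x powr (1/4))\<^sup>2" by (simp add: power_mult_distrib)
  also have "(x powr (1/4))\<^sup>2 = sqrt x"
    using x0 by (simp add: powr_powr[symmetric] powr_realpow[symmetric] powr_powr powr_half_sqrt)
  finally show ?thesis .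
qed

section \<open>Exponential bounds for negatively associated variables\<close>

locale centered_bounded_NA = prob_space M for M :: "'a measure" +
  fixes X :: "'i \<Rightarrow> 'a \<Rightarrow> real" and I :: "'i set" and b :: real
  assumes measurable_X: "\<And>k. k \<in> I \<Longrightarrow> X k \<in> borel_measurable M"
    and neg_assoc_X: "neg_assoc M X I"
    and integral_X: "\<And>k. k \<in> I \<Longrightarrow> (LINT \<omega>|M. X k \<omega>) = 0"
    and b_pos: "0 < b"
    and bounded_X: "\<And>k. k \<in> I \<Longrightarrow> AE \<omega> in M. \<bar>X k \<omega>\<bar> \<le> b"
begin

lemma measurable_sum_X: "K \<subseteq> I \<Longrightarrow> (\<lambda>\<omega>. \<Sum>k\<in>K. X k \<omega>) \<in> borel_measurable M"
  using measurable_X by (intro borel_measurable_sum) auto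

lemma integrable_exp_sum:
  assumes "finite K" "K \<subseteq> I"
  shows "integrable M (\<lambda>\<omega>. exp (t * (\<Sum>k\<in>K. X k \<omega>)))"
proof (rule integrable_const_bound[where B = "exp (\<bar>t\<bar> * (b * card K))"])
  have "AE \<omega> in M. \<forall>k\<in>K. \<bar>X k \<omega>\<bar> \<le> b"
    using assms bounded_X by (subst AE_finite_all) auto
  then show "AE \<omega> in M. norm (exp (t * (\<Sum>k\<in>K. X k \<omega>))) \<le> exp (\<bar>t\<bar> * (b * card K))"
  proof eventually_elim
    case (elim \<omega>)
    have "\<bar>\<Sum>k\<in>K. X k \<omega>\<bar> \<le> (\<Sum>k\<in>K. b)"
      using elim by (intro order_trans[OF sum_abs sum_mono]) auto
    then have "\<bar>t * (\<Sum>k\<in>K. X k \<omega>)\<bar> \<le> \<bar>t\<bar> * (b * card K)"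
      by (simp add: abs_mult mult_left_mono mult.commute)
    then show ?case by (simp add: abs_le_iff)
  qed
  show "(\<lambda>\<omega>. exp (t * (\<Sum>k\<in>K. X k \<omega>))) \<in> borel_measurable M"
    using measurable_sum_X[OF assms(2)] by measurable
qed

lemma integral_exp_sum_insert_le:
  assumes "finite K" "K \<subseteq> I" "j \<in> I" "j \<notin> K"
  shows "(LINT \<omega>|M. exp (t * (\<Sum>k\<in>insert j K. X k \<omega>)))
     \<le> (LINT \<omega>|M. exp (t * (\<Sum>k\<in>K. X k \<omega>))) * (LINT \<omega>|M. exp (t * X j \<omega>))"
proof -
  \<comment> \<open>Negative association speaks about non-decreasing functions; for \<open>t < 0\<close> both factors
    are negated, which leaves their product unchanged.\<close>
  define s :: real where "s = (if 0 \<le> t then 1 else -1)"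
  have s2: "s * s = 1" by (simp add: s_def)
  define f where "f x = s * exp (t * (\<Sum>i\<in>K. x i))" for x :: "'i \<Rightarrow> real"
  define g where "g x = s * exp (t * x j)" for x :: "'i \<Rightarrow> real"
  have mono: "s * exp (t * u) \<le> s * exp (t * v)" if "u \<le> v" for u v
    using that by (cases "0 \<le> t") (auto simp: s_def mult_left_mono mult_left_mono_neg)
  have f: "coord_nondecr K f"
    unfolding coord_nondecr_def f_def by (auto intro!: mono sum_mono)
  have g: "coord_nondecr {j} g"
    unfolding coord_nondecr_def g_def by (auto intro!: mono)
  have fX: "f (\<lambda>i\<in>K. X i \<omega>) = s * exp (t * (\<Sum>k\<in>K. X k \<omega>))" for \<omega>
    unfolding f_def by simp
  have gX: "g (\<lambda>i\<in>{j}. X i \<omega>) = s * exp (t * X j \<omega>)" for \<omega>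
    unfolding g_def by simp
  have fg: "f (\<lambda>i\<in>K. X i \<omega>) * g (\<lambda>i\<in>{j}. X i \<omega>) = exp (t * (\<Sum>k\<in>insert j K. X k \<omega>))"
    for \<omega>
    unfolding fX gX using assms(1,4) s2 by (simp add: algebra_simps exp_add[symmetric])
  have "integrable M (\<lambda>\<omega>. f (\<lambda>i\<in>K. X i \<omega>))"
    unfolding fX using integrable_exp_sum[OF assms(1,2)] by simp
  moreover have "integrable M (\<lambda>\<omega>. g (\<lambda>i\<in>{j}. X i \<omega>))"
    unfolding gX using integrable_exp_sum[of "{j}" t] assms by simp
  moreover have "integrable M (\<lambda>\<omega>. f (\<lambda>i\<in>K. X i \<omega>) * g (\<lambda>i\<in>{j}. X i \<omega>))"
    unfolding fg using integrable_exp_sum[of "insert j K" t] assms by simp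
  ultimately have "(LINT \<omega>|M. f (\<lambda>i\<in>K. X i \<omega>) * g (\<lambda>i\<in>{j}. X i \<omega>))
      - (LINT \<omega>|M. f (\<lambda>i\<in>K. X i \<omega>)) * (LINT \<omega>|M. g (\<lambda>i\<in>{j}. X i \<omega>)) \<le> 0"
    using neg_assoc_X[unfolded neg_assoc_def, rule_format, of K "{j}" f g] assms f g by auto
  then have "(LINT \<omega>|M. exp (t * (\<Sum>k\<in>insert j K. X k \<omega>)))
     - (s * s) * ((LINT \<omega>|M. exp (t * (\<Sum>k\<in>K. X k \<omega>))) * (LINT \<omega>|M. exp (t * X j \<omega>))) \<le> 0"
    unfolding fg unfolding fX gX integral_mult_right_zero by (simp only: mult_ac)
  then show ?thesis unfolding s2 by simp
qed

lemma integral_exp_sum_le_prod: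
  assumes "finite K" "K \<subseteq> I"
  shows "(LINT \<omega>|M. exp (t * (\<Sum>k\<in>K. X k \<omega>))) \<le> (\<Prod>k\<in>K. LINT \<omega>|M. exp (t * X k \<omega>))"
  using assms
proof (induction K rule: finite_induct)
  case empty
  then show ?case by simp
next
  case (insert j K)
  have "(LINT \<omega>|M. exp (t * (\<Sum>k\<in>insert j K. X k \<omega>)))
     \<le> (LINT \<omega>|M. exp (t * (\<Sum>k\<in>K. X k \<omega>))) * (LINT \<omega>|M. exp (t * X j \<omega>))"
    using insert by (intro integral_exp_sum_insert_le) auto
  also have "\<dots> \<le> (\<Prod>k\<in>K. LINT \<omega>|M. exp (t * X k \<omega>)) * (LINT \<omega>|M. exp (t * X j \<omega>))"
    using insert by (intro mult_right_mono) auto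
  finally show ?case using insert by (simp add: mult.commute)
qed

lemma integrable_X_square: "k \<in> I \<Longrightarrow> integrable M (\<lambda>\<omega>. (X k \<omega>)\<^sup>2)"
  by (rule integrable_const_bound[where B = "b\<^sup>2"])
    (use bounded_X measurable_X b_pos in \<open>auto elim!: eventually_mono simp: abs_le_square_iff[symmetric]\<close>)

lemma integral_exp_le:
  assumes k: "k \<in> I" and t: "\<bar>t\<bar> * b \<le> 1"
  shows "(LINT \<omega>|M. exp (t * X k \<omega>)) \<le> exp (t\<^sup>2 * (LINT \<omega>|M. (X k \<omega>)\<^sup>2))"
proof -
  have iX: "integrable M (X k)"
    by (rule integrable_const_bound[where B = b]) (use bounded_X measurable_X k in auto)
  have "(LINT \<omega>|M. exp (t * X k \<omega>)) \<le> (LINT \<omega>|M. 1 + t * X k \<omega> + (t * X k \<omega>)\<^sup>2)"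
  proof (rule integral_mono_AE)
    show "integrable M (\<lambda>\<omega>. exp (t * X k \<omega>))"
      using integrable_exp_sum[of "{k}" t] k by simp
    show "integrable M (\<lambda>\<omega>. 1 + t * X k \<omega> + (t * X k \<omega>)\<^sup>2)"
      using iX integrable_X_square[OF k] by (simp add: power_mult_distrib)
    show "AE \<omega> in M. exp (t * X k \<omega>) \<le> 1 + t * X k \<omega> + (t * X k \<omega>)\<^sup>2"
      using bounded_X[OF k]
    proof eventually_elim
      case (elim \<omega>)
      have "\<bar>t * X k \<omega>\<bar> \<le> \<bar>t\<bar> * b" unfolding abs_mult by (intro mult_left_mono elim) auto
      then show ?case using t by (intro exp_le_quadratic) auto
    qed
  qed
  also have "\<dots> = 1 + t\<^sup>2 * (LINT \<omega>|M. (X k \<omega>)\<^sup>2)"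
    using iX integrable_X_square[OF k] integral_X[OF k] by (simp add: power_mult_distrib prob_space)
  also have "\<dots> \<le> exp (t\<^sup>2 * (LINT \<omega>|M. (X k \<omega>)\<^sup>2))" by (rule exp_ge_add_one_self)
  finally show ?thesis .
qed

lemma integral_exp_sum_le:
  assumes "finite K" "K \<subseteq> I" "\<bar>t\<bar> * b \<le> 1"
  shows "(LINT \<omega>|M. exp (t * (\<Sum>k\<in>K. X k \<omega>))) \<le> exp (t\<^sup>2 * (\<Sum>k\<in>K. LINT \<omega>|M. (X k \<omega>)\<^sup>2))"
proof -
  have "(LINT \<omega>|M. exp (t * (\<Sum>k\<in>K. X k \<omega>))) \<le> (\<Prod>k\<in>K. LINT \<omega>|M. exp (t * X k \<omega>))"
    by (rule integral_exp_sum_le_prod[OF assms(1,2)])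
  also have "\<dots> \<le> (\<Prod>k\<in>K. exp (t\<^sup>2 * (LINT \<omega>|M. (X k \<omega>)\<^sup>2)))"
    using assms by (intro prod_mono conjI integral_exp_le) auto
  also have "\<dots> = exp (t\<^sup>2 * (\<Sum>k\<in>K. LINT \<omega>|M. (X k \<omega>)\<^sup>2))"
    using assms(1) by (simp add: exp_sum sum_distrib_left)
  finally show ?thesis .
qed

lemma prob_sum_ge_le:
  assumes "finite K" "K \<subseteq> I" "(\<Sum>k\<in>K. LINT \<omega>|M. (X k \<omega>)\<^sup>2) \<le> V"
    and "0 < a" "a * b \<le> 2 * V" "s \<in> {-1, 1}"
  shows "prob {\<omega>\<in>space M. a \<le> s * (\<Sum>k\<in>K. X k \<omega>)} \<le> exp (- a\<^sup>2 / (4 * V))"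
proof -
  have "0 < a * b" using assms(4) b_pos by simp
  then have V: "0 < V" using assms(5) by linarith
  \<comment> \<open>Chernoff's bound with the optimal \<open>t = a / (2 V)\<close>, admissible because \<open>a b \<le> 2 V\<close>.\<close>
  define t where "t = a / (2 * V)"
  have t0: "0 < t" using V assms(4) by (simp add: t_def)
  have st: "\<bar>s * t\<bar> = t" "s\<^sup>2 = 1" using assms(6) t0 by auto
  have tb: "\<bar>s * t\<bar> * b \<le> 1" using assms(5) V st by (simp add: t_def field_simps)
  have "{\<omega>\<in>space M. a \<le> s * (\<Sum>k\<in>K. X k \<omega>)}
      = {\<omega>\<in>space M. exp (t * a) \<le> exp ((s * t) * (\<Sum>k\<in>K. X k \<omega>))}"
    using t0 by (simp add: mult.commute mult.left_commute)
  also have "prob \<dots> \<le> (LINT \<omega>|M. exp ((s * t) * (\<Sum>k\<in>K. X k \<omega>))) / exp (t * a)"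
    by (rule integral_Markov_inequality_measure[where A = "space M"])
      (auto intro!: integrable_exp_sum assms)
  also have "\<dots> \<le> exp (t\<^sup>2 * (\<Sum>k\<in>K. LINT \<omega>|M. (X k \<omega>)\<^sup>2)) / exp (t * a)"
    using integral_exp_sum_le[OF assms(1,2) tb] st by (simp add: power_mult_distrib divide_right_mono)
  also have "\<dots> \<le> exp (t\<^sup>2 * V) / exp (t * a)"
    using assms(3) by (intro divide_right_mono) (auto intro: mult_left_mono)
  also have "\<dots> = exp (t\<^sup>2 * V - t * a)" by (simp add: exp_diff)
  also have "t\<^sup>2 * V - t * a = - a\<^sup>2 / (4 * V)"
    using V by (simp add: t_def field_simps power2_eq_square)
  finally show ?thesis .
qed

lemma prob_abs_sum_ge_le:
  assumes "finite K" "K \<subseteq> I" "(\<Sum>k\<in>K. LINT \<omega>|M. (X k \<omega>)\<^sup>2) \<le> V"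
    and "0 < a" "a * b \<le> 2 * V"
  shows "prob {\<omega>\<in>space M. a \<le> \<bar>\<Sum>k\<in>K. X k \<omega>\<bar>} \<le> 2 * exp (- a\<^sup>2 / (4 * V))"
proof -
  have [measurable]: "(\<lambda>\<omega>. \<Sum>k\<in>K. X k \<omega>) \<in> borel_measurable M"
    by (rule measurable_sum_X[OF assms(2)])
  have "{\<omega>\<in>space M. a \<le> \<bar>\<Sum>k\<in>K. X k \<omega>\<bar>} =
     {\<omega>\<in>space M. a \<le> 1 * (\<Sum>k\<in>K. X k \<omega>)} \<union> {\<omega>\<in>space M. a \<le> (-1) * (\<Sum>k\<in>K. X k \<omega>)}"
    by (auto simp: abs_if)
  also have "prob \<dots> \<le> prob {\<omega>\<in>space M. a \<le> 1 * (\<Sum>k\<in>K. X k \<omega>)}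
      + prob {\<omega>\<in>space M. a \<le> (-1) * (\<Sum>k\<in>K. X k \<omega>)}"
    by (rule measure_Un_le) measurable
  also have "\<dots> \<le> exp (- a\<^sup>2 / (4 * V)) + exp (- a\<^sup>2 / (4 * V))"
    by (intro add_mono prob_sum_ge_le assms) auto
  finally show ?thesis by simp
qed

lemma integral_X_square_nonneg: "0 \<le> (LINT \<omega>|M. (X k \<omega>)\<^sup>2)"
  by (rule integral_nonneg_AE) simp

lemma integral_X_square_le: "k \<in> I \<Longrightarrow> (LINT \<omega>|M. (X k \<omega>)\<^sup>2) \<le> b\<^sup>2"
proof -
  assume k: "k \<in> I"
  have "(LINT \<omega>|M. (X k \<omega>)\<^sup>2) \<le> (LINT \<omega>|M. b\<^sup>2)"
  proof (rule integral_mono_AE[OF integrable_X_square[OF k]])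
    show "AE \<omega> in M. (X k \<omega>)\<^sup>2 \<le> b\<^sup>2"
      using bounded_X[OF k]
    proof eventually_elim
      case (elim \<omega>)
      then show ?case using power_mono[of "\<bar>X k \<omega>\<bar>" b 2] by simp
    qed
  qed simp
  then show ?thesis by (simp add: prob_space)
qed

definition sigma :: real where
  "sigma = (SUP k\<in>I. sqrt (LINT \<omega>|M. (X k \<omega>)\<^sup>2))"

lemma bdd_above_sqrt_variance: "bdd_above ((\<lambda>k. sqrt (LINT \<omega>|M. (X k \<omega>)\<^sup>2)) ` I)"
proof (rule bdd_aboveI2[where M = b])
  fix k assume k: "k \<in> I"
  have "sqrt (LINT \<omega>|M. (X k \<omega>)\<^sup>2) \<le> sqrt (b\<^sup>2)"
    by (rule real_sqrt_le_mono[OF integral_X_square_le[OF k]])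
  then show "sqrt (LINT \<omega>|M. (X k \<omega>)\<^sup>2) \<le> b"
    using b_pos by simp
qed

lemma sqrt_variance_le_sigma: "k \<in> I \<Longrightarrow> sqrt (LINT \<omega>|M. (X k \<omega>)\<^sup>2) \<le> sigma"
  unfolding sigma_def by (rule cSUP_upper[OF _ bdd_above_sqrt_variance])

lemma sigma_nonneg:
  assumes "k \<in> I"
  shows "0 \<le> sigma"
proof -
  have "0 \<le> sqrt (LINT \<omega>|M. (X k \<omega>)\<^sup>2)" by (simp add: integral_X_square_nonneg)
  then show ?thesis using sqrt_variance_le_sigma[OF assms] by linarith
qed

lemma sum_variance_le:
  assumes "K \<subseteq> I"
  shows "(\<Sum>k\<in>K. LINT \<omega>|M. (X k \<omega>)\<^sup>2) \<le> sigma\<^sup>2 * card K"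
proof -
  have "(LINT \<omega>|M. (X k \<omega>)\<^sup>2) \<le> sigma\<^sup>2" if "k \<in> K" for k
  proof (rule sqrt_le_D)
    show "sqrt (LINT \<omega>|M. (X k \<omega>)\<^sup>2) \<le> sigma"
      using assms that by (intro sqrt_variance_le_sigma) auto
  qed
  then have "(\<Sum>k\<in>K. LINT \<omega>|M. (X k \<omega>)\<^sup>2) \<le> (\<Sum>k\<in>K. sigma\<^sup>2)"
    by (rule sum_mono)
  then show ?thesis by (simp add: mult.commute)
qed

lemma AE_X_zero_if_sigma_zero:
  assumes "countable I" "sigma = 0"
  shows "AE \<omega> in M. \<forall>k\<in>I. X k \<omega> = 0"
proof (subst AE_ball_countable[OF assms(1)], intro ballI)
  fix k assume k: "k \<in> I"
  have "0 \<le> (LINT \<omega>|M. (X k \<omega>)\<^sup>2)" by (rule integral_X_square_nonneg)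
  moreover have "(LINT \<omega>|M. (X k \<omega>)\<^sup>2) \<le> 0"
    using sqrt_variance_le_sigma[OF k] assms(2) by simp
  ultimately have "(LINT \<omega>|M. (X k \<omega>)\<^sup>2) = 0" by linarith
  then show "AE \<omega> in M. X k \<omega> = 0"
    using integral_nonneg_eq_0_iff_AE[OF integrable_X_square[OF k]] by simp
qed

end

definition index_box :: "('d::finite \<Rightarrow> nat) \<Rightarrow> ('d \<Rightarrow> nat) set" where
  "index_box n = {k\<in>posidx. \<forall>i. k i \<le> n i}"

lemma index_box_eq_PiE: "index_box n = PiE UNIV (\<lambda>i. {1..n i})"
  unfolding index_box_def posidx_def PiE_UNIV_domain by (auto simp: Pi_def)

lemma finite_index_box [simp]: "finite (index_box n)"
  unfolding index_box_eq_PiE by (intro finite_PiE) auto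

lemma card_index_box: "card (index_box n) = (\<Prod>i\<in>UNIV. n i)"
  unfolding index_box_eq_PiE by (subst card_PiE) auto

lemma index_box_subset_posidx: "index_box n \<subseteq> posidx"
  unfolding index_box_def by auto

lemma index_box_mono: "(\<And>i. n i \<le> m i) \<Longrightarrow> index_box n \<subseteq> index_box m"
  unfolding index_box_def using order_trans by blast

lemma partial_sum_eq_sum_index_box: "partial_sum X n \<omega> = (\<Sum>k\<in>index_box n. X k \<omega>)"
  unfolding partial_sum_def index_box_def by simp

lemma partial_sum_diff_eq:
  assumes "\<And>i. n i \<le> m i"
  shows "partial_sum X m \<omega> - partial_sum X n \<omega> = (\<Sum>k\<in>index_box m - index_box n. X k \<omega>)"
  using index_box_mono[of n m] assms unfolding partial_sum_eq_sum_index_box by (simp add: sum_diff)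

lemma card_index_box_diff:
  assumes "\<And>i. n i \<le> m i"
  shows "real (card (index_box m - index_box n)) = (\<Prod>i\<in>UNIV. real (m i)) - (\<Prod>i\<in>UNIV. real (n i))"
proof -
  have sub: "index_box n \<subseteq> index_box m" using assms by (rule index_box_mono)
  then have "card (index_box n) \<le> card (index_box m)" by (simp add: card_mono)
  with sub show ?thesis by (simp add: card_Diff_subset card_index_box of_nat_diff)
qed

lemma le_nat_ceiling: "real g \<le> A \<Longrightarrow> g \<le> nat \<lceil>A\<rceil>"
  by linarith

lemma finite_bounded_multi_index: "finite {k :: 'd::finite \<Rightarrow> nat. \<forall>i. real (k i) \<le> A i}"
proof (rule finite_subset)
  show "{k. \<forall>i. real (k i) \<le> A i} \<subseteq> PiE UNIV (\<lambda>i. {..nat \<lceil>A i\<rceil>})"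
    unfolding PiE_UNIV_domain by (auto simp: Pi_def le_nat_ceiling)
  show "finite (PiE (UNIV :: 'd set) (\<lambda>i. {..nat \<lceil>A i\<rceil>}))"
    by (intro finite_PiE) auto
qed

lemma card_multiples_le:
  assumes "1 \<le> s" "0 \<le> A"
  shows "real (card {g::nat. real g \<le> A \<and> s dvd g}) \<le> A / s + 1"
proof -
  have "{g::nat. real g \<le> A \<and> s dvd g} \<subseteq> (\<lambda>j. s * j) ` {..nat \<lfloor>A / s\<rfloor>}"
  proof
    fix g assume "g \<in> {g::nat. real g \<le> A \<and> s dvd g}"
    then have gA: "real g \<le> A" and "s dvd g" by auto
    then obtain j where g: "g = s * j" by (auto elim: dvdE)
    then have "real j \<le> A / s" using gA assms(1) by (simp add: field_simps)
    then show "g \<in> (\<lambda>j. s * j) ` {..nat \<lfloor>A / s\<rfloor>}" using g by (auto simp: le_nat_floor)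
  qed
  then have "card {g::nat. real g \<le> A \<and> s dvd g} \<le> card ((\<lambda>j. s * j) ` {..nat \<lfloor>A / s\<rfloor>})"
    by (intro card_mono) auto
  also have "\<dots> \<le> card {..nat \<lfloor>A / s\<rfloor>}" by (rule card_image_le) auto
  finally have "real (card {g::nat. real g \<le> A \<and> s dvd g}) \<le> real (nat \<lfloor>A / s\<rfloor>) + 1"
    by simp
  also have "real (nat \<lfloor>A / s\<rfloor>) \<le> A / s" using assms by simp
  finally show ?thesis by simp
qed

lemma card_multiples_grid_le:
  fixes A :: "'d::finite \<Rightarrow> real" and s :: "'d \<Rightarrow> nat"
  assumes "\<And>i. 1 \<le> s i" "\<And>i. 0 \<le> A i"
  shows "real (card {g. \<forall>i. real (g i) \<le> A i \<and> s i dvd g i}) \<le> (\<Prod>i\<in>UNIV. A i / s i + 1)"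
proof -
  have "{g. \<forall>i. real (g i) \<le> A i \<and> s i dvd g i} = PiE UNIV (\<lambda>i. {g. real g \<le> A i \<and> s i dvd g})"
    unfolding PiE_UNIV_domain by (auto simp: Pi_def)
  moreover have "finite {g::nat. real g \<le> A i \<and> s i dvd g}" for i
    by (rule finite_subset[OF _ finite_atMost[of "nat \<lceil>A i\<rceil>"]]) (auto simp: le_nat_ceiling)
  ultimately have "real (card {g. \<forall>i. real (g i) \<le> A i \<and> s i dvd g i})
      = (\<Prod>i\<in>UNIV. real (card {g::nat. real g \<le> A i \<and> s i dvd g}))"
    by (simp add: card_PiE)
  also have "\<dots> \<le> (\<Prod>i\<in>UNIV. A i / s i + 1)"
    using assms by (intro prod_mono conjI card_multiples_le) auto
  finally show ?thesis .
qed

lemma eventually_multi_at_top: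
  assumes "\<And>n. (\<And>i. m \<le> n i) \<Longrightarrow> P n"
  shows "eventually P (multi_at_top :: ('d::finite \<Rightarrow> nat) filter)"
  unfolding multi_at_top_def
  by (subst eventually_INF_finite, simp, rule exI[of _ "\<lambda>i n. m \<le> n i"])
    (auto simp: eventually_filtercomap_at_top_linorder assms)

lemma finite_increments:
  "finite {\<bar>partial_sum X (\<lambda>i. n i + k i) \<omega> - partial_sum X n \<omega>\<bar> | k.
      k \<in> posidx \<and> (\<forall>i. real (k i) \<le> \<delta> * real (n i))}"
  by (rule finite_image_set[OF finite_subset[OF _ finite_bounded_multi_index]]) auto

lemma max_incr_nonneg: "0 \<le> max_incr X \<delta> n \<omega>"
  unfolding max_incr_def using finite_increments by (intro Max_ge) auto

lemma max_incr_le: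
  assumes "0 \<le> B"
    and "\<And>k. k \<in> posidx \<Longrightarrow> \<forall>i. real (k i) \<le> \<delta> * real (n i) \<Longrightarrow>
      \<bar>partial_sum X (\<lambda>i. n i + k i) \<omega> - partial_sum X n \<omega>\<bar> \<le> B"
  shows "max_incr X \<delta> n \<omega> \<le> B"
  unfolding max_incr_def using finite_increments assms by (subst Max_le_iff) auto

section \<open>Borel--Cantelli over a countable index type\<close>

lemma (in prob_space) AE_finitely_many_events:
  fixes E :: "'j::countable \<Rightarrow> 'a set"
  assumes "\<And>j. E j \<in> sets M" and "\<And>F. finite F \<Longrightarrow> (\<Sum>j\<in>F. prob (E j)) \<le> B"
  shows "AE \<omega> in M. finite {j. \<omega> \<in> E j}"
proof (cases "finite (UNIV :: 'j set)")
  case True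
  then show ?thesis by (intro AE_I2) (metis finite_subset subset_UNIV)
next
  case False
  define e where "e = from_nat_into (UNIV :: 'j set)"
  have "bij e" unfolding e_def using False by (intro bij_betw_from_nat_into) auto
  then have inj: "inj e" and surj: "surj e" by (auto simp: bij_betw_def)
  have "summable (\<lambda>m. prob (E (e m)))"
  proof (rule summableI_nonneg_bounded)
    fix n
    have "(\<Sum>m<n. prob (E (e m))) = (\<Sum>j\<in>e ` {..<n}. prob (E j))"
      using inj by (subst sum.reindex) (auto intro: inj_on_subset)
    also have "\<dots> \<le> B" by (rule assms(2)) simp
    finally show "(\<Sum>m<n. prob (E (e m))) \<le> B" .
  qed auto
  then have "AE \<omega> in M. eventually (\<lambda>m. \<omega> \<in> space M - E (e m)) sequentially"
    by (intro borel_cantelli_AE1) (auto simp: assms(1) less_top[symmetric])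
  then show ?thesis
  proof eventually_elim
    case (elim \<omega>)
    then obtain m0 where m0: "\<And>m. m0 \<le> m \<Longrightarrow> \<omega> \<notin> E (e m)"
      by (auto simp: eventually_sequentially)
    have "{j. \<omega> \<in> E j} \<subseteq> e ` {..<m0}"
    proof
      fix j assume "j \<in> {j. \<omega> \<in> E j}"
      moreover obtain m where "j = e m" using surj by (rule surjE)
      ultimately have "m < m0" using m0 not_le by blast
      then show "j \<in> e ` {..<m0}" using \<open>j = e m\<close> by auto
    qed
    then show ?case by (rule finite_subset) auto
  qed
qed

lemma sum_prod_le_suminf_power:
  fixes h :: "nat \<Rightarrow> real" and F :: "('d::finite \<Rightarrow> nat) set"
  assumes "\<And>t. 0 \<le> h t" "summable h" "finite F"
  shows "(\<Sum>j\<in>F. \<Prod>i\<in>UNIV. h (j i)) \<le> (suminf h) ^ CARD('d)"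
proof -
  obtain m where m: "\<And>j i. j \<in> F \<Longrightarrow> j i \<le> m"
    using finite_nat_set_iff_bounded_le[of "\<Union>j\<in>F. range j"] assms(3) by auto
  have "(\<Sum>j\<in>F. \<Prod>i\<in>UNIV. h (j i)) \<le> (\<Sum>j\<in>PiE (UNIV::'d set) (\<lambda>_. {..m}). \<Prod>i\<in>UNIV. h (j i))"
    using m assms(1) by (intro sum_mono2 finite_PiE prod_nonneg) (auto simp: PiE_UNIV_domain)
  also have "\<dots> = (\<Prod>i\<in>(UNIV::'d set). \<Sum>t\<le>m. h t)"
    by (subst prod_sum_PiE) auto
  also have "\<dots> \<le> (\<Prod>i\<in>(UNIV::'d set). suminf h)"
    using assms(1,2) by (intro prod_mono conjI sum_nonneg sum_le_suminf) auto
  finally show ?thesis by simp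
qed

section \<open>Increments of partial sums after a fixed index\<close>

definition vol :: "('d::finite \<Rightarrow> nat) \<Rightarrow> real" where
  "vol N = (\<Prod>i\<in>UNIV. real (N i))"

definition log_vol :: "('d::finite \<Rightarrow> nat) \<Rightarrow> real" where
  "log_vol N = Lg (vol N)"

definition loglog_vol :: "('d::finite \<Rightarrow> nat) \<Rightarrow> real" where
  "loglog_vol N = Lg (log_vol N)"

lemma vol_ge_1: "(\<And>i. 1 \<le> N i) \<Longrightarrow> 1 \<le> vol N"
  unfolding vol_def by (intro prod_ge_1) auto

lemma log_vol_ge_1: "1 \<le> log_vol N"
  unfolding log_vol_def by (rule Lg_ge_1)

lemma loglog_vol_ge_1: "1 \<le> loglog_vol N"
  unfolding loglog_vol_def by (rule Lg_ge_1)

lemma loglog_vol_le_log_vol: "loglog_vol N \<le> log_vol N"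
  unfolding loglog_vol_def by (rule Lg_le_self[OF log_vol_ge_1])

lemma vol_le_exp_log_vol: "vol N \<le> exp (log_vol N)"
  unfolding log_vol_def exp_Lg by simp

lemma log_vol_le_exp_loglog_vol: "log_vol N \<le> exp (loglog_vol N)"
  unfolding loglog_vol_def exp_Lg by simp

lemma coord_le_vol:
  assumes "\<And>i. 1 \<le> N i"
  shows "real (N i) \<le> vol N"
proof -
  have "vol N = real (N i) * (\<Prod>j\<in>UNIV - {i}. real (N j))"
    unfolding vol_def by (subst prod.remove[of UNIV i]) auto
  moreover have "1 \<le> (\<Prod>j\<in>UNIV - {i}. real (N j))" using assms by (intro prod_ge_1) auto
  ultimately show ?thesis by (simp add: mult_le_cancel_left1)
qed

lemma log_coord_le_log_vol:
  assumes "\<And>i. 1 \<le> N i"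
  shows "max 1 (ln (real (N i))) \<le> log_vol N"
proof -
  have "ln (real (N i)) \<le> ln (max (vol N) (exp 1))"
    using coord_le_vol[of N i, OF assms] assms[of i] max_exp_1_pos[of "vol N"]
    by (subst ln_le_cancel_iff) auto
  then show ?thesis using log_vol_ge_1[of N] unfolding log_vol_def Lg_def by simp
qed

locale NA_increments = centered_bounded_NA M X posidx b
  for M :: "'a measure" and X :: "('d::finite \<Rightarrow> nat) \<Rightarrow> 'a \<Rightarrow> real" and b :: real +
  fixes \<delta> :: real
  assumes \<delta>_pos: "0 < \<delta>" and sigma_pos: "0 < sigma"
begin

definition "\<Delta> = 2 * \<delta>"
definition "rdim = real CARD('d)"
definition "growth = \<Delta> * (1 + \<Delta>) ^ CARD('d)"
text \<open>A single coarse (rounding) increment exceeds \<open>thr N\<close> with probability at most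
  \<open>2 exp (-coarse_rate loglog |N|)\<close> (\<open>2 exp (-fine_rate log |N|)\<close>); the rates are chosen to
  beat the \<open>(log |N|)\<^sup>d\<close> coarse and the \<open>|N|\<close> rounding increments by a factor \<open>(log |N|)\<^sup>-\<^sup>2\<^sup>d\<close>.\<close>
definition "coarse_rate = 3 * rdim"
definition "fine_rate = 2 * rdim + 1"

definition thr :: "('d \<Rightarrow> nat) \<Rightarrow> real" where
  "thr N = sqrt (4 * coarse_rate * sigma\<^sup>2 * rdim * growth * vol N * loglog_vol N)"

definition mesh :: "('d \<Rightarrow> nat) \<Rightarrow> real" where
  "mesh N = min (1 / rdim) (\<Delta> * loglog_vol N / (3 * log_vol N))"

definition step :: "('d \<Rightarrow> nat) \<Rightarrow> 'd \<Rightarrow> nat" where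
  "step N i = max 1 (nat \<lfloor>mesh N * real (N i)\<rfloor>)"

definition window :: "('d \<Rightarrow> nat) \<Rightarrow> ('d \<Rightarrow> nat) set" where
  "window N = {k. \<forall>i. real (k i) \<le> \<Delta> * real (N i)}"

definition coarse_window :: "('d \<Rightarrow> nat) \<Rightarrow> ('d \<Rightarrow> nat) set" where
  "coarse_window N = {g. \<forall>i. real (g i) \<le> \<Delta> * real (N i) \<and> step N i dvd g i}"

definition round_down :: "('d \<Rightarrow> nat) \<Rightarrow> ('d \<Rightarrow> nat) \<Rightarrow> ('d \<Rightarrow> nat)" where
  "round_down N k = (\<lambda>i. step N i * (k i div step N i))"

definition coarse_event :: "('d \<Rightarrow> nat) \<Rightarrow> 'a set" where
  "coarse_event N = {\<omega>\<in>space M. \<exists>g\<in>coarse_window N.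
     thr N \<le> \<bar>partial_sum X (\<lambda>i. N i + g i) \<omega> - partial_sum X N \<omega>\<bar>}"

definition rounding_event :: "('d \<Rightarrow> nat) \<Rightarrow> 'a set" where
  "rounding_event N = {\<omega>\<in>space M. \<exists>k\<in>window N.
     thr N \<le> \<bar>partial_sum X (\<lambda>i. N i + k i) \<omega> - partial_sum X (\<lambda>i. N i + round_down N k i) \<omega>\<bar>}"

text \<open>Once \<open>\<surd>|N| \<ge> vol_min\<close>, the side condition \<open>a b \<le> 2 V\<close> of \<open>prob_abs_sum_ge_le\<close>
  holds for all coarse and rounding increments.\<close>
definition vol_min :: real where
  "vol_min = 16 * (coarse_rate + fine_rate\<^sup>2) * b\<^sup>2 / (sigma\<^sup>2 * rdim * growth)"

definition large :: "('d \<Rightarrow> nat) \<Rightarrow> bool" where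
  "large N \<longleftrightarrow> exp 1 \<le> vol N \<and> vol_min \<le> sqrt (vol N)"

lemma \<Delta>_pos: "0 < \<Delta>"
  unfolding \<Delta>_def using \<delta>_pos by simp

lemma rdim_ge_1: "1 \<le> rdim"
  unfolding rdim_def by simp

lemma growth_pos: "0 < growth"
  unfolding growth_def using \<Delta>_pos by simp

lemma coarse_rate_ge_1: "1 \<le> coarse_rate"
  unfolding coarse_rate_def using rdim_ge_1 by simp

lemma fine_rate_ge_1: "1 \<le> fine_rate"
  unfolding fine_rate_def using rdim_ge_1 by simp

lemma fine_rate_le_coarse_rate: "fine_rate \<le> coarse_rate"
  unfolding fine_rate_def coarse_rate_def using rdim_ge_1 by simp

lemma thr_squared:
  assumes "\<And>i. 1 \<le> N i"
  shows "(thr N)\<^sup>2 = 4 * coarse_rate * sigma\<^sup>2 * rdim * growth * vol N * loglog_vol N"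
  unfolding thr_def using vol_ge_1[of N, OF assms] coarse_rate_ge_1 rdim_ge_1 growth_pos loglog_vol_ge_1[of N]
  by simp

lemma thr_pos:
  assumes "\<And>i. 1 \<le> N i"
  shows "0 < thr N"
  unfolding thr_def
  using vol_ge_1[of N, OF assms] coarse_rate_ge_1 rdim_ge_1 growth_pos loglog_vol_ge_1[of N] sigma_pos
  by simp

lemma mesh_pos: "0 < mesh N"
  unfolding mesh_def using rdim_ge_1 \<Delta>_pos loglog_vol_ge_1[of N] log_vol_ge_1[of N] by simp

lemma step_ge_1: "1 \<le> step N i"
  unfolding step_def by simp

lemma step_le: "real (step N i) - 1 \<le> mesh N * real (N i)"
proof (cases "nat \<lfloor>mesh N * real (N i)\<rfloor> \<le> 1")
  case True
  then show ?thesis using mesh_pos[of N] unfolding step_def by (simp add: max_def)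
next
  case False
  then have "step N i = nat \<lfloor>mesh N * real (N i)\<rfloor>" unfolding step_def by simp
  moreover have "0 \<le> mesh N * real (N i)" using mesh_pos[of N] by simp
  ultimately show ?thesis by linarith
qed

lemma half_le_step:
  assumes "2 \<le> mesh N * real (N i)"
  shows "mesh N * real (N i) / 2 \<le> real (step N i)"
proof -
  have "mesh N * real (N i) - 1 \<le> real (nat \<lfloor>mesh N * real (N i)\<rfloor>)" using assms by linarith
  moreover have "real (nat \<lfloor>mesh N * real (N i)\<rfloor>) \<le> real (step N i)" unfolding step_def by simp
  ultimately show ?thesis using assms by linarith
qed

lemma round_down_le: "round_down N k i \<le> k i"
  unfolding round_down_def by simp

lemma le_round_down_plus_mesh: "real (k i) \<le> real (round_down N k i) + mesh N * real (N i)"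
proof -
  have "real (k i) = real (round_down N k i + k i mod step N i)"
    unfolding round_down_def by (simp only: mult_div_mod_eq)
  also have "\<dots> = real (round_down N k i) + real (k i mod step N i)"
    by (rule of_nat_add)
  finally have "real (k i) = real (round_down N k i) + real (k i mod step N i)" .
  moreover have "k i mod step N i < step N i"
    using step_ge_1[of N i] by (intro mod_less_divisor) simp
  then have "Suc (k i mod step N i) \<le> step N i" by (rule Suc_leI)
  then have "real (Suc (k i mod step N i)) \<le> real (step N i)"
    by (simp only: of_nat_le_iff)
  ultimately show ?thesis using step_le[of N i] of_nat_Suc[of "k i mod step N i"] by linarith
qed

lemma coarse_window_subset_window: "coarse_window N \<subseteq> window N"
  unfolding coarse_window_def window_def by auto

lemma round_down_in_coarse_window:
  assumes "k \<in> window N"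
  shows "round_down N k \<in> coarse_window N"
proof -
  have "real (round_down N k i) \<le> \<Delta> * real (N i)" for i
  proof -
    have "real (round_down N k i) \<le> real (k i)"
      using round_down_le[of N k i] by (simp only: of_nat_le_iff)
    also have "\<dots> \<le> \<Delta> * real (N i)" using assms unfolding window_def by simp
    finally show ?thesis .
  qed
  moreover have "step N i dvd round_down N k i" for i
    unfolding round_down_def by simp
  ultimately show ?thesis unfolding coarse_window_def by blast
qed

lemma finite_window: "finite (window N)"
  unfolding window_def by (rule finite_bounded_multi_index)

lemma finite_coarse_window: "finite (coarse_window N)"
  using finite_subset[OF coarse_window_subset_window finite_window] .

lemma card_window_le:
  assumes "\<And>i. 1 \<le> N i"
  shows "real (card (window N)) \<le> (1 + \<Delta>) ^ CARD('d) * vol N"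
proof -
  have "window N = {k. \<forall>i. real (k i) \<le> \<Delta> * real (N i) \<and> 1 dvd k i}"
    unfolding window_def by simp
  then have "real (card (window N)) \<le> (\<Prod>i\<in>UNIV. \<Delta> * real (N i) / real 1 + 1)"
    using \<Delta>_pos card_multiples_grid_le[where s = "\<lambda>_. 1" and A = "\<lambda>i. \<Delta> * real (N i)"] by simp
  also have "\<dots> \<le> (1 + \<Delta>) ^ CARD('d) * vol N"
    unfolding vol_def using assms \<Delta>_pos
    by (intro prod_le_power_mult) (auto simp: algebra_simps Suc_le_eq)
  finally show ?thesis .
qed

lemma coarse_cells_le:
  assumes "1 \<le> N i"
  shows "\<Delta> * real (N i) / real (step N i) + 1 \<le> 2 * \<Delta> / mesh N + 1"
proof (cases "2 \<le> mesh N * real (N i)")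
  case True
  have "\<Delta> * real (N i) / real (step N i) \<le> \<Delta> * real (N i) / (mesh N * real (N i) / 2)"
    using half_le_step[OF True] True \<Delta>_pos by (intro divide_left_mono) auto
  also have "\<dots> = 2 * \<Delta> / mesh N" using assms mesh_pos[of N] by (simp add: field_simps)
  finally show ?thesis by simp
next
  case False
  have "\<Delta> * real (N i) / real (step N i) \<le> \<Delta> * real (N i)"
    using step_ge_1[of N i] \<Delta>_pos by (intro divide_left_mono[of 1, simplified]) auto
  also have "\<dots> \<le> 2 * \<Delta> / mesh N"
    using False mesh_pos[of N] \<Delta>_pos by (simp add: field_simps)
  finally show ?thesis by simp
qed

lemma coarse_cells_le_log_vol: "2 * \<Delta> / mesh N + 1 \<le> (2 * \<Delta> * rdim + 7) * log_vol N"
proof -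
  have "1 / mesh N \<le> rdim + 3 * log_vol N / \<Delta>"
  proof (cases "1 / rdim \<le> \<Delta> * loglog_vol N / (3 * log_vol N)")
    case True
    then show ?thesis using rdim_ge_1 \<Delta>_pos log_vol_ge_1[of N] by (simp add: mesh_def)
  next
    case False
    then have "1 / mesh N = 3 * log_vol N / (\<Delta> * loglog_vol N)" by (simp add: mesh_def)
    also have "\<dots> \<le> 3 * log_vol N / \<Delta>"
      using loglog_vol_ge_1[of N] \<Delta>_pos log_vol_ge_1[of N]
      by (simp add: field_simps mult_left_mono)
    finally show ?thesis using rdim_ge_1 by simp
  qed
  then have "2 * \<Delta> * (1 / mesh N) \<le> 2 * \<Delta> * (rdim + 3 * log_vol N / \<Delta>)"
    using \<Delta>_pos by (intro mult_left_mono) auto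
  also have "\<dots> = 2 * \<Delta> * rdim + 6 * log_vol N"
    using \<Delta>_pos by (simp add: field_simps)
  also have "\<dots> \<le> 2 * \<Delta> * rdim * log_vol N + 6 * log_vol N"
    using \<Delta>_pos rdim_ge_1 log_vol_ge_1[of N] by simp
  finally show ?thesis using log_vol_ge_1[of N] by (simp add: algebra_simps)
qed

lemma card_coarse_window_le:
  assumes "\<And>i. 1 \<le> N i"
  shows "real (card (coarse_window N)) \<le> ((2 * \<Delta> * rdim + 7) * log_vol N) ^ CARD('d)"
proof -
  have "real (card (coarse_window N)) \<le> (\<Prod>i\<in>UNIV. \<Delta> * real (N i) / real (step N i) + 1)"
    unfolding coarse_window_def using \<Delta>_pos step_ge_1 by (intro card_multiples_grid_le) auto
  also have "\<dots> \<le> (\<Prod>i\<in>(UNIV::'d set). (2 * \<Delta> * rdim + 7) * log_vol N)"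
  proof (intro prod_mono conjI)
    fix i
    show "0 \<le> \<Delta> * real (N i) / real (step N i) + 1" using \<Delta>_pos by simp
    show "\<Delta> * real (N i) / real (step N i) + 1 \<le> (2 * \<Delta> * rdim + 7) * log_vol N"
      using coarse_cells_le[of N i] assms[of i] coarse_cells_le_log_vol[of N] by linarith
  qed
  finally show ?thesis by simp
qed

lemma card_increment_le:
  assumes N: "\<And>i. 1 \<le> N i" and g: "g \<in> window N"
  shows "real (card (index_box (\<lambda>i. N i + g i) - index_box N)) \<le> rdim * growth * vol N"
proof -
  have "(\<Prod>i\<in>UNIV. real (N i + g i)) \<le> (1 + \<Delta>) ^ CARD('d) * vol N"
    unfolding vol_def using g by (intro prod_le_power_mult) (auto simp: window_def algebra_simps)
  then have "real (card (index_box (\<lambda>i. N i + g i) - index_box N)) \<le> ((1 + \<Delta>) ^ CARD('d) - 1) * vol N"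
    by (subst card_index_box_diff) (auto simp: vol_def algebra_simps)
  also have "\<dots> \<le> (CARD('d) * \<Delta> * (1 + \<Delta>) ^ CARD('d)) * vol N"
    using vol_ge_1[of N, OF N] \<Delta>_pos by (intro mult_right_mono one_plus_power_minus_one_le) auto
  also have "\<dots> = rdim * growth * vol N" by (simp add: rdim_def growth_def)
  finally show ?thesis .
qed

lemma one_plus_mesh_power_le_3: "(1 + mesh N) ^ CARD('d) \<le> 3"
proof -
  have "(1 + mesh N) ^ CARD('d) \<le> exp (mesh N) ^ CARD('d)"
    using mesh_pos[of N] by (intro power_mono) auto
  also have "\<dots> = exp (rdim * mesh N)" by (simp add: rdim_def exp_of_nat_mult)
  also have "\<dots> \<le> exp 1"
  proof -
    have "mesh N \<le> 1 / rdim" by (simp add: mesh_def)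
    then have "rdim * mesh N \<le> 1" using rdim_ge_1 by (simp add: field_simps)
    then show ?thesis by simp
  qed
  also have "\<dots> \<le> 3" by (rule exp_le)
  finally show ?thesis .
qed

lemma card_rounding_increment_le:
  assumes N: "\<And>i. 1 \<le> N i" and k: "k \<in> window N"
  shows "real (card (index_box (\<lambda>i. N i + k i) - index_box (\<lambda>i. N i + round_down N k i)))
    \<le> rdim * growth * vol N * loglog_vol N / log_vol N"
proof -
  define R where "R = (\<Prod>i\<in>UNIV. real (N i + round_down N k i))"
  have R0: "0 \<le> R" unfolding R_def by (simp add: prod_nonneg)
  have "real (round_down N k i) \<le> \<Delta> * real (N i)" for i
    using round_down_in_coarse_window[OF k] by (simp add: coarse_window_def)
  then have R: "R \<le> (1 + \<Delta>) ^ CARD('d) * vol N"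
    unfolding R_def vol_def by (intro prod_le_power_mult) (auto simp: algebra_simps)
  have "(\<Prod>i\<in>UNIV. real (N i + k i)) \<le> (1 + mesh N) ^ CARD('d) * R"
    unfolding R_def
  proof (intro prod_le_power_mult)
    fix i
    have "mesh N * real (N i) \<le> mesh N * real (N i + round_down N k i)"
      using mesh_pos[of N] by (intro mult_left_mono) auto
    then have "real (k i) \<le> real (round_down N k i) + mesh N * real (N i + round_down N k i)"
      using le_round_down_plus_mesh[of k i N] by linarith
    then show "real (N i + k i) \<le> (1 + mesh N) * real (N i + round_down N k i)"
      by (simp add: algebra_simps)
  qed simp
  then have "real (card (index_box (\<lambda>i. N i + k i) - index_box (\<lambda>i. N i + round_down N k i)))
      \<le> ((1 + mesh N) ^ CARD('d) - 1) * R"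
    using round_down_le[of N k] by (subst card_index_box_diff) (auto simp: R_def algebra_simps)
  also have "\<dots> \<le> (CARD('d) * mesh N * (1 + mesh N) ^ CARD('d)) * R"
    using mesh_pos[of N] R0 by (intro mult_right_mono one_plus_power_minus_one_le) auto
  also have "\<dots> \<le> (rdim * mesh N * 3) * ((1 + \<Delta>) ^ CARD('d) * vol N)"
    using mesh_pos[of N] R R0 one_plus_mesh_power_le_3[of N]
    by (intro mult_mono) (auto simp: rdim_def)
  also have "\<dots> \<le> (rdim * (\<Delta> * loglog_vol N / log_vol N)) * ((1 + \<Delta>) ^ CARD('d) * vol N)"
  proof -
    have "mesh N \<le> \<Delta> * loglog_vol N / (3 * log_vol N)" by (simp add: mesh_def)
    then have "mesh N * 3 \<le> \<Delta> * loglog_vol N / log_vol N"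
      using log_vol_ge_1[of N] by (simp add: field_simps)
    then have "rdim * (mesh N * 3) \<le> rdim * (\<Delta> * loglog_vol N / log_vol N)"
      using rdim_ge_1 by (intro mult_left_mono) auto
    then show ?thesis
      using \<Delta>_pos vol_ge_1[of N, OF N] by (intro mult_right_mono) (auto simp: mult_ac)
  qed
  also have "\<dots> = rdim * growth * vol N * loglog_vol N / log_vol N" by (simp add: growth_def)
  finally show ?thesis .
qed

lemma vol_min_le:
  assumes "large N"
  shows "16 * (coarse_rate + fine_rate\<^sup>2) * b\<^sup>2 \<le> sigma\<^sup>2 * rdim * growth * sqrt (vol N)"
proof -
  define K where "K = sigma\<^sup>2 * rdim * growth"
  have K: "0 < K" unfolding K_def using sigma_pos rdim_ge_1 growth_pos by simp
  have "vol_min * K \<le> sqrt (vol N) * K"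
    using assms K unfolding large_def by (intro mult_right_mono) auto
  moreover have "vol_min * K = 16 * (coarse_rate + fine_rate\<^sup>2) * b\<^sup>2"
    unfolding vol_min_def K_def[symmetric] using K by simp
  ultimately show ?thesis unfolding K_def by (simp add: mult_ac)
qed

lemma log_vol_squared_le:
  assumes "large N"
  shows "log_vol N * log_vol N \<le> 16 * sqrt (vol N)"
  using Lg_squared_le[of "vol N"] assms unfolding large_def log_vol_def by (simp add: power2_eq_square)

lemma thr_mult_b_le:
  assumes N: "\<And>i. 1 \<le> N i" and "large N"
  shows "thr N * b \<le> 2 * (sigma\<^sup>2 * rdim * growth * vol N)"
proof -
  define K where "K = sigma\<^sup>2 * rdim * growth"
  define p where "p = sqrt (vol N)"
  have K0: "0 < K" unfolding K_def using sigma_pos rdim_ge_1 growth_pos by simp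
  have p0: "0 \<le> p" and pp: "p * p = vol N"
    unfolding p_def using vol_ge_1[of N, OF N] by auto
  have "loglog_vol N \<le> log_vol N * log_vol N"
    using loglog_vol_le_log_vol[of N] log_vol_ge_1[of N] by (simp add: order_trans[OF _ mult_le_cancel_left1[THEN iffD2]])
  also have "\<dots> \<le> 16 * p"
    unfolding p_def by (rule log_vol_squared_le[OF assms(2)])
  finally have "(coarse_rate * b\<^sup>2) * loglog_vol N \<le> (coarse_rate * b\<^sup>2) * (16 * p)"
    using coarse_rate_ge_1 by (intro mult_left_mono) auto
  then have "coarse_rate * loglog_vol N * b\<^sup>2 \<le> (16 * coarse_rate * b\<^sup>2) * p"
    by (simp add: mult_ac)
  also have "\<dots> \<le> (16 * (coarse_rate + fine_rate\<^sup>2) * b\<^sup>2) * p"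
    using p0 by (intro mult_right_mono) auto
  also have "\<dots> \<le> (K * p) * p"
    using vol_min_le[OF assms(2)] p0 unfolding K_def p_def by (intro mult_right_mono) auto
  finally have hb: "coarse_rate * loglog_vol N * b\<^sup>2 \<le> K * vol N" by (simp add: pp mult.assoc)
  have "(thr N * b)\<^sup>2 = 4 * (K * vol N) * (coarse_rate * loglog_vol N * b\<^sup>2)"
    using thr_squared[of N, OF N] by (simp add: power_mult_distrib K_def mult_ac)
  also have "\<dots> \<le> 4 * (K * vol N) * (K * vol N)"
    using hb K0 vol_ge_1[of N, OF N] by (intro mult_left_mono) auto
  also have "\<dots> = (2 * (K * vol N))\<^sup>2" by (simp add: power2_eq_square)
  finally have "(thr N * b)\<^sup>2 \<le> (2 * (K * vol N))\<^sup>2" .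
  then have "thr N * b \<le> 2 * (K * vol N)"
    by (rule power2_le_imp_le) (use K0 vol_ge_1[of N, OF N] in simp)
  then show ?thesis unfolding K_def .
qed

lemma fine_bound_le_thr:
  assumes N: "\<And>i. 1 \<le> N i" and "large N"
  shows "2 * fine_rate * log_vol N * b \<le> thr N"
proof -
  define K where "K = sigma\<^sup>2 * rdim * growth"
  define p where "p = sqrt (vol N)"
  have K0: "0 < K" unfolding K_def using sigma_pos rdim_ge_1 growth_pos by simp
  have p0: "0 \<le> p" and pp: "p * p = vol N"
    unfolding p_def using vol_ge_1[of N, OF N] by auto
  have "16 * fine_rate\<^sup>2 * b\<^sup>2 \<le> 16 * (coarse_rate + fine_rate\<^sup>2) * b\<^sup>2"
    using coarse_rate_ge_1 by (intro mult_right_mono) auto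
  also have "\<dots> \<le> K * p" unfolding K_def p_def by (rule vol_min_le[OF assms(2)])
  finally have hb: "16 * fine_rate\<^sup>2 * b\<^sup>2 \<le> K * p" .
  have "(2 * fine_rate * log_vol N * b)\<^sup>2 = 4 * (fine_rate\<^sup>2 * b\<^sup>2) * (log_vol N * log_vol N)"
    by (simp add: power2_eq_square mult_ac)
  also have "\<dots> \<le> 4 * (fine_rate\<^sup>2 * b\<^sup>2) * (16 * p)"
    unfolding p_def using log_vol_squared_le[OF assms(2)] by (intro mult_left_mono) auto
  also have "\<dots> = 4 * (16 * fine_rate\<^sup>2 * b\<^sup>2) * p" by (simp add: mult_ac)
  also have "\<dots> \<le> 4 * (K * p) * p" by (rule mult_right_mono[OF _ p0]) (use hb in \<open>simp add: mult_ac\<close>)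
  also have "\<dots> = 4 * K * vol N" by (simp add: pp[symmetric] mult_ac)
  also have "\<dots> \<le> 4 * K * vol N * (coarse_rate * loglog_vol N)"
  proof -
    have "1 * 1 \<le> coarse_rate * loglog_vol N"
      using coarse_rate_ge_1 loglog_vol_ge_1[of N] by (intro mult_mono) auto
    then show ?thesis
      using K0 vol_ge_1[of N, OF N] mult_left_mono[of 1 "coarse_rate * loglog_vol N" "4 * K * vol N"]
      by simp
  qed
  also have "\<dots> = (thr N)\<^sup>2" using thr_squared[of N, OF N] by (simp add: K_def mult_ac)
  finally show ?thesis
    by (rule power2_le_imp_le) (use thr_pos[of N, OF N] in simp)
qed

lemma measurable_partial_sum [measurable]: "partial_sum X m \<in> borel_measurable M"
proof -
  have "partial_sum X m = (\<lambda>\<omega>. \<Sum>k\<in>index_box m. X k \<omega>)"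
    by (simp add: partial_sum_eq_sum_index_box fun_eq_iff)
  then show ?thesis using measurable_sum_X[OF index_box_subset_posidx] by simp
qed

lemma prob_coarse_increment_le:
  assumes N: "\<And>i. 1 \<le> N i" and "large N" and g: "g \<in> coarse_window N"
  shows "prob {\<omega>\<in>space M. thr N \<le> \<bar>partial_sum X (\<lambda>i. N i + g i) \<omega> - partial_sum X N \<omega>\<bar>}
    \<le> 2 * exp (- coarse_rate * loglog_vol N)"
proof -
  define R where "R = index_box (\<lambda>i. N i + g i) - index_box N"
  define V where "V = sigma\<^sup>2 * rdim * growth * vol N"
  have V0: "0 < V" unfolding V_def using sigma_pos rdim_ge_1 growth_pos vol_ge_1[of N, OF N] by simp
  have thr_squared_eq: "(thr N)\<^sup>2 = 4 * V * (coarse_rate * loglog_vol N)"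
    using thr_squared[of N, OF N] unfolding V_def by (simp add: mult_ac)
  have "{\<omega>\<in>space M. thr N \<le> \<bar>partial_sum X (\<lambda>i. N i + g i) \<omega> - partial_sum X N \<omega>\<bar>}
      = {\<omega>\<in>space M. thr N \<le> \<bar>\<Sum>k\<in>R. X k \<omega>\<bar>}"
    unfolding R_def by (subst partial_sum_diff_eq) auto
  also have "prob \<dots> \<le> 2 * exp (- (thr N)\<^sup>2 / (4 * V))"
  proof (rule prob_abs_sum_ge_le)
    show "finite R" "R \<subseteq> posidx" unfolding R_def using index_box_subset_posidx by auto
    have "real (card R) \<le> rdim * growth * vol N"
      unfolding R_def using g coarse_window_subset_window by (intro card_increment_le N) auto
    have "(\<Sum>k\<in>R. LINT \<omega>|M. (X k \<omega>)\<^sup>2) \<le> sigma\<^sup>2 * card R"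
      by (rule sum_variance_le) fact
    also have "\<dots> \<le> sigma\<^sup>2 * (rdim * growth * vol N)"
      by (rule mult_left_mono) (fact, simp)
    finally show "(\<Sum>k\<in>R. LINT \<omega>|M. (X k \<omega>)\<^sup>2) \<le> V"
      by (simp add: V_def mult_ac)
    show "0 < thr N" by (rule thr_pos[of N, OF N])
    show "thr N * b \<le> 2 * V" unfolding V_def by (rule thr_mult_b_le[OF N assms(2)])
  qed
  also have "- (thr N)\<^sup>2 / (4 * V) = - coarse_rate * loglog_vol N"
    using thr_squared_eq V0 by simp
  finally show ?thesis .
qed

lemma exp_neg_coarse_rate_le: "exp (- coarse_rate * loglog_vol N) \<le> 1 / log_vol N ^ (3 * CARD('d))"
proof -
  have "log_vol N ^ (3 * CARD('d)) \<le> exp (real (3 * CARD('d)) * loglog_vol N)"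
    by (intro power_le_exp_mult log_vol_ge_1 log_vol_le_exp_loglog_vol)
  also have "real (3 * CARD('d)) * loglog_vol N = coarse_rate * loglog_vol N"
    by (simp add: coarse_rate_def rdim_def)
  finally show ?thesis
    using log_vol_ge_1[of N] by (simp add: exp_minus field_simps)
qed

lemma prob_coarse_event_le:
  assumes N: "\<And>i. 1 \<le> N i" and "large N"
  shows "prob (coarse_event N) \<le> 2 * (2 * \<Delta> * rdim + 7) ^ CARD('d) / log_vol N ^ (2 * CARD('d))"
proof -
  define F where "F g = {\<omega>\<in>space M. thr N \<le> \<bar>partial_sum X (\<lambda>i. N i + g i) \<omega> - partial_sum X N \<omega>\<bar>}"
    for g
  define c where "c = 2 * \<Delta> * rdim + 7"
  have c0: "0 \<le> c" unfolding c_def using \<Delta>_pos rdim_ge_1 by simp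
  have "prob (coarse_event N) = prob (\<Union>g\<in>coarse_window N. F g)"
    unfolding coarse_event_def F_def by (rule arg_cong[where f = prob]) auto
  also have "\<dots> \<le> (\<Sum>g\<in>coarse_window N. prob (F g))"
    unfolding F_def by (rule finite_measure_subadditive_finite) (auto simp: finite_coarse_window)
  also have "\<dots> \<le> (\<Sum>g\<in>coarse_window N. 2 * exp (- coarse_rate * loglog_vol N))"
    unfolding F_def by (intro sum_mono prob_coarse_increment_le N assms(2))
  also have "\<dots> \<le> (c * log_vol N) ^ CARD('d) * (2 * (1 / log_vol N ^ (3 * CARD('d))))"
    using card_coarse_window_le[of N, OF N] exp_neg_coarse_rate_le[of N] c0 log_vol_ge_1[of N]
    by (simp only: sum_constant c_def[symmetric]) (intro mult_mono; simp)
  also have "\<dots> = 2 * c ^ CARD('d) / log_vol N ^ (2 * CARD('d))"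
  proof -
    have "log_vol N ^ (3 * CARD('d)) = log_vol N ^ CARD('d) * log_vol N ^ (2 * CARD('d))"
      by (simp add: power_add[symmetric])
    then show ?thesis using log_vol_ge_1[of N] by (simp add: power_mult_distrib)
  qed
  finally show ?thesis unfolding c_def .
qed

lemma prob_rounding_increment_le:
  assumes N: "\<And>i. 1 \<le> N i" and "large N" and k: "k \<in> window N"
  shows "prob {\<omega>\<in>space M.
      thr N \<le> \<bar>partial_sum X (\<lambda>i. N i + k i) \<omega> - partial_sum X (\<lambda>i. N i + round_down N k i) \<omega>\<bar>}
    \<le> 2 * exp (- fine_rate * log_vol N)"
proof -
  define R where "R = index_box (\<lambda>i. N i + k i) - index_box (\<lambda>i. N i + round_down N k i)"
  define V where "V = (thr N)\<^sup>2 / (4 * fine_rate * log_vol N)"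
  have l0: "0 < log_vol N" using log_vol_ge_1[of N] by simp
  have thr0: "0 < thr N" by (rule thr_pos[of N, OF N])
  have V0: "0 < V" unfolding V_def using thr0 fine_rate_ge_1 l0 by simp
  have "{\<omega>\<in>space M.
      thr N \<le> \<bar>partial_sum X (\<lambda>i. N i + k i) \<omega> - partial_sum X (\<lambda>i. N i + round_down N k i) \<omega>\<bar>}
      = {\<omega>\<in>space M. thr N \<le> \<bar>\<Sum>j\<in>R. X j \<omega>\<bar>}"
    unfolding R_def by (subst partial_sum_diff_eq) (auto simp: round_down_le)
  also have "prob \<dots> \<le> 2 * exp (- (thr N)\<^sup>2 / (4 * V))"
  proof (rule prob_abs_sum_ge_le)
    show "finite R" "R \<subseteq> posidx" unfolding R_def using index_box_subset_posidx by auto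
    have "(\<Sum>j\<in>R. LINT \<omega>|M. (X j \<omega>)\<^sup>2) \<le> sigma\<^sup>2 * card R"
      by (rule sum_variance_le) fact
    also have "\<dots> \<le> sigma\<^sup>2 * (rdim * growth * vol N * loglog_vol N / log_vol N)"
      unfolding R_def by (intro mult_left_mono card_rounding_increment_le N k) simp
    also have "\<dots> \<le> (coarse_rate / fine_rate) * (sigma\<^sup>2 * (rdim * growth * vol N * loglog_vol N / log_vol N))"
    proof -
      have "1 \<le> coarse_rate / fine_rate" using fine_rate_le_coarse_rate fine_rate_ge_1 by simp
      moreover have "0 \<le> sigma\<^sup>2 * (rdim * growth * vol N * loglog_vol N / log_vol N)"
        using rdim_ge_1 growth_pos vol_ge_1[of N, OF N] l0 loglog_vol_ge_1[of N] by simp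
      ultimately show ?thesis using mult_right_mono[of 1 "coarse_rate / fine_rate"] by fastforce
    qed
    also have "\<dots> = V"
      unfolding V_def thr_squared[of N, OF N] using fine_rate_ge_1 l0 by (simp add: field_simps)
    finally show "(\<Sum>j\<in>R. LINT \<omega>|M. (X j \<omega>)\<^sup>2) \<le> V" .
    show "0 < thr N" by (rule thr0)
    have "thr N * b = thr N * (2 * fine_rate * log_vol N * b) / (2 * fine_rate * log_vol N)"
      using fine_rate_ge_1 l0 by simp
    also have "\<dots> \<le> thr N * thr N / (2 * fine_rate * log_vol N)"
      using fine_bound_le_thr[OF N assms(2)] thr0 fine_rate_ge_1 l0
      by (intro divide_right_mono mult_left_mono) auto
    also have "\<dots> = 2 * V" unfolding V_def by (simp add: power2_eq_square field_simps)
    finally show "thr N * b \<le> 2 * V" .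
  qed
  also have "- (thr N)\<^sup>2 / (4 * V) = - fine_rate * log_vol N"
    unfolding V_def using thr0 fine_rate_ge_1 l0 by (simp add: field_simps)
  finally show ?thesis .
qed

lemma exp_neg_fine_rate_le:
  "exp (log_vol N) * exp (- fine_rate * log_vol N) \<le> 1 / log_vol N ^ (2 * CARD('d))"
proof -
  have "log_vol N \<le> exp (log_vol N)"
    using exp_ge_add_one_self[of "log_vol N"] by linarith
  then have "log_vol N ^ (2 * CARD('d)) \<le> exp (real (2 * CARD('d)) * log_vol N)"
    by (intro power_le_exp_mult log_vol_ge_1)
  then have "exp (- (2 * rdim) * log_vol N) \<le> 1 / log_vol N ^ (2 * CARD('d))"
    using log_vol_ge_1[of N] by (simp add: rdim_def exp_minus field_simps)
  moreover have "exp (log_vol N) * exp (- fine_rate * log_vol N) = exp (- (2 * rdim) * log_vol N)"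
    by (simp add: fine_rate_def algebra_simps flip: exp_add)
  ultimately show ?thesis by simp
qed

lemma prob_rounding_event_le:
  assumes N: "\<And>i. 1 \<le> N i" and "large N"
  shows "prob (rounding_event N) \<le> 2 * (1 + \<Delta>) ^ CARD('d) / log_vol N ^ (2 * CARD('d))"
proof -
  define F where "F k = {\<omega>\<in>space M.
    thr N \<le> \<bar>partial_sum X (\<lambda>i. N i + k i) \<omega> - partial_sum X (\<lambda>i. N i + round_down N k i) \<omega>\<bar>}" for k
  have "prob (rounding_event N) = prob (\<Union>k\<in>window N. F k)"
    unfolding rounding_event_def F_def by (rule arg_cong[where f = prob]) auto
  also have "\<dots> \<le> (\<Sum>k\<in>window N. prob (F k))"
    unfolding F_def by (rule finite_measure_subadditive_finite) (auto simp: finite_window)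
  also have "\<dots> \<le> (\<Sum>k\<in>window N. 2 * exp (- fine_rate * log_vol N))"
    unfolding F_def by (intro sum_mono prob_rounding_increment_le N assms(2))
  also have "\<dots> \<le> (1 + \<Delta>) ^ CARD('d) * exp (log_vol N) * (2 * exp (- fine_rate * log_vol N))"
  proof -
    have "(1 + \<Delta>) ^ CARD('d) * vol N \<le> (1 + \<Delta>) ^ CARD('d) * exp (log_vol N)"
      by (rule mult_left_mono) (use vol_le_exp_log_vol[of N] \<Delta>_pos in auto)
    then have "real (card (window N)) \<le> (1 + \<Delta>) ^ CARD('d) * exp (log_vol N)"
      using card_window_le[of N, OF N] by linarith
    then show ?thesis by (simp add: mult_right_mono)
  qed
  also have "\<dots> = 2 * (1 + \<Delta>) ^ CARD('d) * (exp (log_vol N) * exp (- fine_rate * log_vol N))"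
    by (simp add: mult_ac)
  also have "\<dots> \<le> 2 * (1 + \<Delta>) ^ CARD('d) * (1 / log_vol N ^ (2 * CARD('d)))"
    by (rule mult_left_mono[OF exp_neg_fine_rate_le]) (use \<Delta>_pos in simp)
  finally show ?thesis by simp
qed

end

section \<open>Blocking along a geometric grid\<close>

context NA_increments
begin

text \<open>The ratio \<open>\<theta>\<close> is chosen so that \<open>(1 + \<delta>) \<theta> = 1 + 5\<delta>/4 < 1 + 2\<delta>\<close>: the whole range
  \<open>n \<le> m \<le> n + \<delta> n\<close> of a block then lies in the window of its grid point.\<close>
definition \<theta> :: real where
  "\<theta> = 1 + \<delta> / (4 * (1 + \<delta>))"

definition grid_pt :: "('d \<Rightarrow> nat) \<Rightarrow> ('d \<Rightarrow> nat)" where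
  "grid_pt j = (\<lambda>i. nat \<lfloor>\<theta> ^ j i\<rfloor>)"

definition grid_index :: "('d \<Rightarrow> nat) \<Rightarrow> ('d \<Rightarrow> nat)" where
  "grid_index n = (\<lambda>i. nat \<lfloor>ln (real (n i)) / ln \<theta>\<rfloor>)"

definition h :: "nat \<Rightarrow> real" where
  "h t = 1 / (max 1 (ln (real (nat \<lfloor>\<theta> ^ t\<rfloor>))))\<^sup>2"

definition bad_event :: "('d \<Rightarrow> nat) \<Rightarrow> 'a set" where
  "bad_event j = (if large (grid_pt j) then coarse_event (grid_pt j) \<union> rounding_event (grid_pt j) else {})"

lemma \<theta>_gt_1: "1 < \<theta>"
  unfolding \<theta>_def using \<delta>_pos by simp

lemma one_plus_\<delta>_mult_\<theta>: "(1 + \<delta>) * \<theta> = 1 + 5 * \<delta> / 4"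
  unfolding \<theta>_def using \<delta>_pos by (simp add: field_simps)

lemma \<theta>_power_eq_exp: "\<theta> ^ t = exp (real t * ln \<theta>)"
  using \<theta>_gt_1 by (simp add: exp_of_nat_mult)

lemma grid_pt_ge_1: "1 \<le> grid_pt j i"
  unfolding grid_pt_def using \<theta>_gt_1 one_le_power[of \<theta> "j i"] by linarith

lemma h_nonneg: "0 \<le> h t"
  unfolding h_def by simp

lemma half_index_le_ln_grid:
  assumes "2 * ln 2 \<le> real t * ln \<theta>"
  shows "real t * ln \<theta> / 2 \<le> ln (real (nat \<lfloor>\<theta> ^ t\<rfloor>))"
proof -
  have "exp (2 * ln 2) \<le> \<theta> ^ t" unfolding \<theta>_power_eq_exp using assms by simp
  then have four: "4 \<le> \<theta> ^ t" by (simp add: exp_of_nat_mult[of 2, simplified])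
  then have "\<theta> ^ t / 2 \<le> real (nat \<lfloor>\<theta> ^ t\<rfloor>)" by linarith
  then have "ln (\<theta> ^ t / 2) \<le> ln (real (nat \<lfloor>\<theta> ^ t\<rfloor>))"
    using four by (subst ln_le_cancel_iff) auto
  moreover have "ln (\<theta> ^ t / 2) = real t * ln \<theta> - ln 2"
    using four by (simp add: ln_div \<theta>_power_eq_exp)
  ultimately show ?thesis using assms by linarith
qed

lemma summable_h: "summable h"
proof -
  define a where "a = ln \<theta>"
  have a0: "0 < a" unfolding a_def using \<theta>_gt_1 by simp
  show ?thesis
  proof (rule summable_comparison_test'[where N = "nat \<lceil>2 * ln 2 / a\<rceil> + 1"])
    show "summable (\<lambda>t. (4 / a\<^sup>2) * inverse (real t ^ 2))"
      by (intro summable_mult inverse_power_summable) auto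
    fix t assume t: "nat \<lceil>2 * ln 2 / a\<rceil> + 1 \<le> t"
    then have t1: "1 \<le> t" by simp
    have "2 * ln 2 / a \<le> real t" using t by linarith
    then have "2 * ln 2 \<le> real t * a" using a0 by (simp add: field_simps)
    then have "real t * a / 2 \<le> max 1 (ln (real (nat \<lfloor>\<theta> ^ t\<rfloor>)))"
      using half_index_le_ln_grid[of t] unfolding a_def by linarith
    moreover have "0 < real t * a / 2" using t1 a0 by simp
    ultimately have "h t \<le> 1 / (real t * a / 2)\<^sup>2"
      unfolding h_def using t1 a0 by (intro divide_left_mono power_mono mult_pos_pos) auto
    also have "\<dots> = (4 / a\<^sup>2) * inverse (real t ^ 2)"
      using a0 t1 by (simp add: field_simps power2_eq_square)
    finally show "norm (h t) \<le> (4 / a\<^sup>2) * inverse (real t ^ 2)" using h_nonneg[of t] by simp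
  qed
qed

lemma inverse_log_vol_power_le_prod_h:
  "1 / log_vol (grid_pt j) ^ (2 * CARD('d)) \<le> (\<Prod>i\<in>UNIV. h (j i))"
proof -
  have "1 / log_vol (grid_pt j) ^ (2 * CARD('d)) = (\<Prod>i\<in>(UNIV::'d set). 1 / (log_vol (grid_pt j))\<^sup>2)"
    by (simp add: power_mult power_one_over)
  also have "\<dots> \<le> (\<Prod>i\<in>UNIV. h (j i))"
  proof (intro prod_mono conjI)
    fix i
    show "0 \<le> 1 / (log_vol (grid_pt j))\<^sup>2" by simp
    have "max 1 (ln (real (grid_pt j i))) \<le> log_vol (grid_pt j)"
      by (intro log_coord_le_log_vol grid_pt_ge_1)
    then have "1 / (log_vol (grid_pt j))\<^sup>2 \<le> 1 / (max 1 (ln (real (grid_pt j i))))\<^sup>2"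
      by (intro divide_left_mono power_mono) auto
    then show "1 / (log_vol (grid_pt j))\<^sup>2 \<le> h (j i)" unfolding h_def grid_pt_def by simp
  qed
  finally show ?thesis .
qed

lemma coarse_event_in_sets: "coarse_event N \<in> sets M"
proof -
  have "coarse_event N = (\<Union>g\<in>coarse_window N.
      {\<omega>\<in>space M. thr N \<le> \<bar>partial_sum X (\<lambda>i. N i + g i) \<omega> - partial_sum X N \<omega>\<bar>})"
    unfolding coarse_event_def by auto
  also have "\<dots> \<in> sets M" using finite_coarse_window by measurable
  finally show ?thesis .
qed

lemma rounding_event_in_sets: "rounding_event N \<in> sets M"
proof -
  have "rounding_event N = (\<Union>k\<in>window N. {\<omega>\<in>space M.
      thr N \<le> \<bar>partial_sum X (\<lambda>i. N i + k i) \<omega> - partial_sum X (\<lambda>i. N i + round_down N k i) \<omega>\<bar>})"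
    unfolding rounding_event_def by auto
  also have "\<dots> \<in> sets M" using finite_window by measurable
  finally show ?thesis .
qed

lemma bad_event_in_sets: "bad_event j \<in> sets M"
  unfolding bad_event_def using coarse_event_in_sets rounding_event_in_sets by auto

definition bad_const :: real where
  "bad_const = 2 * (2 * \<Delta> * rdim + 7) ^ CARD('d) + 2 * (1 + \<Delta>) ^ CARD('d)"

lemma bad_const_nonneg: "0 \<le> bad_const"
  unfolding bad_const_def using \<Delta>_pos rdim_ge_1 by simp

lemma prob_bad_event_le: "prob (bad_event j) \<le> bad_const * (\<Prod>i\<in>UNIV. h (j i))"
proof (cases "large (grid_pt j)")
  case False
  then show ?thesis unfolding bad_event_def
    using bad_const_nonneg h_nonneg by (simp add: prod_nonneg)
next
  case True
  define N where "N = grid_pt j"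
  have N1: "\<And>i. 1 \<le> N i" unfolding N_def by (rule grid_pt_ge_1)
  have "prob (bad_event j) \<le> prob (coarse_event N) + prob (rounding_event N)"
    unfolding bad_event_def N_def using True coarse_event_in_sets rounding_event_in_sets
    by (simp add: measure_Un_le)
  also have "\<dots> \<le> 2 * (2 * \<Delta> * rdim + 7) ^ CARD('d) / log_vol N ^ (2 * CARD('d))
      + 2 * (1 + \<Delta>) ^ CARD('d) / log_vol N ^ (2 * CARD('d))"
    using True unfolding N_def[symmetric]
    by (intro add_mono prob_coarse_event_le prob_rounding_event_le N1)
  also have "\<dots> = bad_const * (1 / log_vol N ^ (2 * CARD('d)))"
    unfolding bad_const_def by (simp add: add_divide_distrib)
  also have "\<dots> \<le> bad_const * (\<Prod>i\<in>UNIV. h (j i))"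
    unfolding N_def by (intro mult_left_mono inverse_log_vol_power_le_prod_h bad_const_nonneg)
  finally show ?thesis .
qed

lemma AE_finitely_many_bad_events: "AE \<omega> in M. finite {j. \<omega> \<in> bad_event j}"
proof (rule AE_finitely_many_events[where B = "bad_const * (suminf h) ^ CARD('d)"])
  fix F :: "('d \<Rightarrow> nat) set" assume F: "finite F"
  have "(\<Sum>j\<in>F. prob (bad_event j)) \<le> (\<Sum>j\<in>F. bad_const * (\<Prod>i\<in>UNIV. h (j i)))"
    by (intro sum_mono prob_bad_event_le)
  also have "\<dots> = bad_const * (\<Sum>j\<in>F. \<Prod>i\<in>UNIV. h (j i))" by (simp add: sum_distrib_left)
  also have "\<dots> \<le> bad_const * (suminf h) ^ CARD('d)"
    by (intro mult_left_mono sum_prod_le_suminf_power h_nonneg summable_h F bad_const_nonneg)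
  finally show "(\<Sum>j\<in>F. prob (bad_event j)) \<le> bad_const * (suminf h) ^ CARD('d)" .
qed (rule bad_event_in_sets)

lemma grid_index_bounds:
  assumes "1 \<le> n i"
  shows "\<theta> ^ grid_index n i \<le> real (n i)" and "real (n i) < \<theta> ^ (grid_index n i + 1)"
proof -
  define x where "x = ln (real (n i)) / ln \<theta>"
  have a0: "0 < ln \<theta>" using \<theta>_gt_1 by simp
  have x0: "0 \<le> x" unfolding x_def using assms a0 by simp
  have n: "real (n i) = exp (x * ln \<theta>)" unfolding x_def using assms a0 by simp
  have j: "real (grid_index n i) = of_int \<lfloor>x\<rfloor>" unfolding grid_index_def x_def using x0 x_def by simp
  have "real (grid_index n i) * ln \<theta> \<le> x * ln \<theta>" using j a0 by (intro mult_right_mono) linarith+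
  then show "\<theta> ^ grid_index n i \<le> real (n i)" unfolding \<theta>_power_eq_exp n by simp
  have "x * ln \<theta> < real (grid_index n i + 1) * ln \<theta>" using j a0 by (intro mult_strict_right_mono) linarith+
  then show "real (n i) < \<theta> ^ (grid_index n i + 1)" unfolding \<theta>_power_eq_exp n by simp
qed

lemma grid_pt_grid_index:
  assumes "1 \<le> n i"
  shows "grid_pt (grid_index n) i \<le> n i" and "real (n i) < \<theta> * (real (grid_pt (grid_index n) i) + 1)"
proof -
  show "grid_pt (grid_index n) i \<le> n i"
    using grid_index_bounds(1)[of n i, OF assms] unfolding grid_pt_def by linarith
  have "\<theta> ^ grid_index n i < real (grid_pt (grid_index n) i) + 1"
    using \<theta>_gt_1 one_le_power[of \<theta> "grid_index n i"] unfolding grid_pt_def by linarith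
  then have "\<theta> * \<theta> ^ grid_index n i < \<theta> * (real (grid_pt (grid_index n) i) + 1)"
    using \<theta>_gt_1 by simp
  then show "real (n i) < \<theta> * (real (grid_pt (grid_index n) i) + 1)"
    using grid_index_bounds(2)[of n i, OF assms] by simp
qed

lemma less_grid_index:
  assumes "1 \<le> n i" and "\<theta> ^ (m + 1) \<le> real (n i)"
  shows "m < grid_index n i"
proof -
  have a0: "0 < ln \<theta>" using \<theta>_gt_1 by simp
  have "ln (\<theta> ^ (m + 1)) \<le> ln (real (n i))"
    using assms \<theta>_gt_1 by (subst ln_le_cancel_iff) auto
  moreover have "ln (\<theta> ^ (m + 1)) = real (m + 1) * ln \<theta>"
    by (rule ln_realpow)
  ultimately have "real (m + 1) * ln \<theta> \<le> ln (real (n i))" by linarith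
  then have "real (m + 1) \<le> ln (real (n i)) / ln \<theta>" using a0 by (simp add: field_simps)
  then show ?thesis unfolding grid_index_def by linarith
qed

lemma block_in_window:
  assumes "1 \<le> n i" and "(4 + 5 * \<delta>) / (3 * \<delta>) \<le> real (grid_pt (grid_index n) i)"
  shows "(1 + \<delta>) * real (n i) - real (grid_pt (grid_index n) i) \<le> \<Delta> * real (grid_pt (grid_index n) i)"
proof -
  define N where "N = real (grid_pt (grid_index n) i)"
  have "(1 + \<delta>) * real (n i) \<le> (1 + \<delta>) * (\<theta> * (N + 1))"
    using grid_pt_grid_index(2)[of n i, OF assms(1)] \<delta>_pos unfolding N_def by (intro mult_left_mono) auto
  also have "\<dots> = (1 + 5 * \<delta> / 4) * (N + 1)"
    by (simp only: mult.assoc[symmetric] one_plus_\<delta>_mult_\<theta>)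
  finally have "(1 + \<delta>) * real (n i) \<le> 1 + 5 * \<delta> / 4 + N + 5 / 4 * (\<delta> * N)"
    by (simp add: algebra_simps add_divide_distrib)
  moreover have "4 + 5 * \<delta> \<le> 3 * (\<delta> * N)"
    using assms(2) \<delta>_pos unfolding N_def by (simp add: field_simps)
  ultimately show ?thesis unfolding \<Delta>_def N_def[symmetric] by linarith
qed

lemma increment_le_of_not_bad:
  assumes "\<omega> \<in> space M" "\<omega> \<notin> coarse_event N" "\<omega> \<notin> rounding_event N" "k \<in> window N"
  shows "\<bar>partial_sum X (\<lambda>i. N i + k i) \<omega> - partial_sum X N \<omega>\<bar> \<le> 2 * thr N"
proof -
  have "\<bar>partial_sum X (\<lambda>i. N i + round_down N k i) \<omega> - partial_sum X N \<omega>\<bar> < thr N"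
    using assms round_down_in_coarse_window[OF assms(4)] unfolding coarse_event_def by (auto simp: not_le)
  moreover have "\<bar>partial_sum X (\<lambda>i. N i + k i) \<omega> - partial_sum X (\<lambda>i. N i + round_down N k i) \<omega>\<bar> < thr N"
    using assms unfolding rounding_event_def by (auto simp: not_le)
  ultimately show ?thesis by linarith
qed

lemma max_incr_le_thr:
  assumes n1: "\<And>i. 1 \<le> n i" and big: "\<And>i. (4 + 5 * \<delta>) / (3 * \<delta>) \<le> real (grid_pt (grid_index n) i)"
    and \<omega>: "\<omega> \<in> space M" "\<omega> \<notin> coarse_event (grid_pt (grid_index n))"
      "\<omega> \<notin> rounding_event (grid_pt (grid_index n))"
  shows "max_incr X \<delta> n \<omega> \<le> 4 * thr (grid_pt (grid_index n))"
proof (rule max_incr_le)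
  define N where "N = grid_pt (grid_index n)"
  have Nle: "N i \<le> n i" for i unfolding N_def by (rule grid_pt_grid_index(1)[of n i, OF n1])
  show "0 \<le> 4 * thr N" using thr_pos[of N] grid_pt_ge_1 unfolding N_def by (simp add: less_imp_le)
  fix k assume "k \<in> posidx" and k: "\<forall>i. real (k i) \<le> \<delta> * real (n i)"
  \<comment> \<open>Both \<open>S\<^sub>n\<^sub>+\<^sub>k\<close> and \<open>S\<^sub>n\<close> are increments of \<open>S\<^sub>N\<close> within the window of the grid point \<open>N\<close>.\<close>
  have nk: "real (n i + k i - N i) \<le> \<Delta> * real (N i)" for i
  proof -
    have "real (n i + k i - N i) = real (n i) + real (k i) - real (N i)"
      using Nle[of i] by (simp add: of_nat_diff)
    also have "\<dots> \<le> (1 + \<delta>) * real (n i) - real (N i)" using k by (simp add: algebra_simps)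
    also have "\<dots> \<le> \<Delta> * real (N i)"
      using block_in_window[of n i, OF n1 big] unfolding N_def .
    finally show ?thesis .
  qed
  have "real (n i - N i) \<le> \<Delta> * real (N i)" for i
    using nk[of i] of_nat_mono[of "n i - N i" "n i + k i - N i"] by simp
  then have "(\<lambda>i. n i + k i - N i) \<in> window N" "(\<lambda>i. n i - N i) \<in> window N"
    using nk unfolding window_def by auto
  moreover have "N i + (n i + k i - N i) = n i + k i" "N i + (n i - N i) = n i" for i
    using Nle[of i] by arith+
  then have "(\<lambda>i. N i + (n i + k i - N i)) = (\<lambda>i. n i + k i)" "(\<lambda>i. N i + (n i - N i)) = n"
    by auto
  ultimately have "\<bar>partial_sum X (\<lambda>i. n i + k i) \<omega> - partial_sum X N \<omega>\<bar> \<le> 2 * thr N"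
      "\<bar>partial_sum X n \<omega> - partial_sum X N \<omega>\<bar> \<le> 2 * thr N"
    using increment_le_of_not_bad[OF \<omega>[unfolded N_def[symmetric]]] by metis+
  then show "\<bar>partial_sum X (\<lambda>i. n i + k i) \<omega> - partial_sum X n \<omega>\<bar> \<le> 4 * thr N" by linarith
qed

lemma eventually_max_incr_le_thr:
  assumes \<omega>: "\<omega> \<in> space M" and fin: "finite {j. \<omega> \<in> bad_event j}"
  shows "\<forall>\<^sub>F n in multi_at_top. max_incr X \<delta> n \<omega> \<le> 4 * thr (grid_pt (grid_index n))"
proof -
  \<comment> \<open>Only finitely many grid points are bad, so their indices are bounded in any fixed coordinate.\<close>
  define i0 :: 'd where "i0 = undefined"
  obtain m where m: "\<And>j. \<omega> \<in> bad_event j \<Longrightarrow> j i0 \<le> m"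
    using fin finite_nat_set_iff_bounded_le[of "(\<lambda>j. j i0) ` {j. \<omega> \<in> bad_event j}"] by auto
  define T where "T = max (exp 1) (vol_min\<^sup>2)"
  define B where "B = max (\<theta> ^ (m + 1)) (max (\<theta> * ((4 + 5 * \<delta>) / (3 * \<delta>) + 1)) (\<theta> * (T + 1)))"
  show ?thesis
  proof (rule eventually_multi_at_top[of "max 1 (nat \<lceil>B\<rceil>)"])
    fix n :: "'d \<Rightarrow> nat" assume n: "\<And>i. max 1 (nat \<lceil>B\<rceil>) \<le> n i"
    define N where "N = grid_pt (grid_index n)"
    have n1: "1 \<le> n i" for i using n[of i] by simp
    have nB: "B \<le> real (n i)" for i using n[of i] by linarith
    have less_N: "c < real (N i)" if "\<theta> * (c + 1) \<le> real (n i)" for c i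
    proof -
      have "\<theta> * (c + 1) < \<theta> * (real (N i) + 1)"
        using that grid_pt_grid_index(2)[of n i, OF n1] unfolding N_def by linarith
      then show ?thesis using \<theta>_gt_1 by simp
    qed
    have "T < vol N"
      using less_N[of T i0] nB[of i0] coord_le_vol[of N i0] grid_pt_ge_1 unfolding B_def N_def
      by fastforce
    then have "large N"
      unfolding large_def T_def using real_sqrt_le_mono[of "vol_min\<^sup>2" "vol N"] by auto
    moreover have "m < grid_index n i0"
      using nB[of i0] by (intro less_grid_index n1) (simp add: B_def)
    then have "\<omega> \<notin> bad_event (grid_index n)" using m[of "grid_index n"] by linarith
    ultimately have "\<omega> \<notin> coarse_event N" "\<omega> \<notin> rounding_event N"
      unfolding bad_event_def N_def by auto
    moreover have "(4 + 5 * \<delta>) / (3 * \<delta>) \<le> real (N i)" for i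
      using less_N[of "(4 + 5 * \<delta>) / (3 * \<delta>)" i] nB[of i] unfolding B_def by simp
    ultimately show "max_incr X \<delta> n \<omega> \<le> 4 * thr (grid_pt (grid_index n))"
      using \<omega> unfolding N_def by (intro max_incr_le_thr n1) auto
  qed
qed

lemma normalized_le:
  assumes N1: "\<And>i. 1 \<le> N i" and le: "\<And>i. N i \<le> n i" and "0 \<le> x" "x \<le> 4 * thr N"
  shows "x / sqrt (2 * real CARD('d) * real (\<Prod>i\<in>UNIV. n i) * Lg (Lg (real (\<Prod>i\<in>UNIV. n i))))
    \<le> 4 * sigma * sqrt (2 * coarse_rate * growth)"
proof -
  define Q where "Q = real (\<Prod>i\<in>UNIV. n i)"
  define d0 where "d0 = sqrt (2 * rdim * vol N * loglog_vol N)"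
  have P1: "1 \<le> vol N" by (rule vol_ge_1[of N, OF N1])
  have PQ: "vol N \<le> Q" unfolding Q_def vol_def of_nat_prod using le by (intro prod_mono) auto
  have d0: "0 < d0" unfolding d0_def using rdim_ge_1 P1 loglog_vol_ge_1[of N] by simp
  have "d0 \<le> sqrt (2 * real CARD('d) * Q * Lg (Lg Q))"
    unfolding d0_def rdim_def loglog_vol_def log_vol_def
    using PQ P1 Lg_ge_1[of "Lg (vol N)"] Lg_mono[OF Lg_mono[OF PQ]]
    by (intro real_sqrt_le_mono mult_mono) auto
  then have "x / sqrt (2 * real CARD('d) * Q * Lg (Lg Q)) \<le> x / d0"
    using d0 assms(3) PQ P1 Lg_pos[of "Lg Q"] by (intro divide_left_mono mult_pos_pos) auto
  also have "\<dots> \<le> 4 * thr N / d0" using assms(4) d0 by (intro divide_right_mono) auto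
  also have "\<dots> = 4 * sigma * sqrt (2 * coarse_rate * growth)"
  proof -
    have "thr N / d0 = sqrt ((thr N)\<^sup>2 / d0\<^sup>2)"
      using thr_pos[of N, OF N1] d0 by (simp add: real_sqrt_divide)
    also have "(thr N)\<^sup>2 / d0\<^sup>2 = sigma\<^sup>2 * (2 * coarse_rate * growth)"
      unfolding thr_squared[of N, OF N1] d0_def
      using rdim_ge_1 P1 loglog_vol_ge_1[of N] by (simp add: field_simps)
    also have "sqrt (sigma\<^sup>2 * (2 * coarse_rate * growth)) = sigma * sqrt (2 * coarse_rate * growth)"
      using sigma_pos by (simp add: real_sqrt_mult)
    finally show ?thesis by simp
  qed
  finally show ?thesis unfolding Q_def .
qed

lemma AE_limsup_le:
  "AE \<omega> in M. Limsup multi_at_top (\<lambda>n. ereal (max_incr X \<delta> n \<omega> /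
      sqrt (2 * real CARD('d) * real (\<Prod>i\<in>UNIV. n i) * Lg (Lg (real (\<Prod>i\<in>UNIV. n i))))))
    \<le> ereal (4 * sigma * sqrt (2 * coarse_rate * growth))"
  using AE_finitely_many_bad_events AE_space
proof eventually_elim
  case (elim \<omega>)
  have "\<forall>\<^sub>F n in multi_at_top. \<forall>i. 1 \<le> n i"
    by (rule eventually_multi_at_top) auto
  moreover have "\<forall>\<^sub>F n in multi_at_top. max_incr X \<delta> n \<omega> \<le> 4 * thr (grid_pt (grid_index n))"
    using elim by (intro eventually_max_incr_le_thr) auto
  ultimately have "\<forall>\<^sub>F n in multi_at_top. ereal (max_incr X \<delta> n \<omega> /
      sqrt (2 * real CARD('d) * real (\<Prod>i\<in>UNIV. n i) * Lg (Lg (real (\<Prod>i\<in>UNIV. n i)))))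
    \<le> ereal (4 * sigma * sqrt (2 * coarse_rate * growth))"
  proof eventually_elim
    case (elim n)
    have "max_incr X \<delta> n \<omega> /
        sqrt (2 * real CARD('d) * real (\<Prod>i\<in>UNIV. n i) * Lg (Lg (real (\<Prod>i\<in>UNIV. n i))))
      \<le> 4 * sigma * sqrt (2 * coarse_rate * growth)"
    proof (rule normalized_le)
      show "grid_pt (grid_index n) i \<le> n i" for i using elim by (intro grid_pt_grid_index(1)) auto
    qed (use elim grid_pt_ge_1 max_incr_nonneg in auto)
    then show ?case by simp
  qed
  then show ?case by (rule Limsup_bounded)
qed

lemma limsup_const_le:
  "4 * sigma * sqrt (2 * coarse_rate * growth)
    \<le> 80 * real CARD('d) * sqrt (\<delta> * (1 + 2 * \<delta>) ^ CARD('d)) * sigma"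
proof -
  define w where "w = \<delta> * (1 + 2 * \<delta>) ^ CARD('d)"
  have w0: "0 \<le> w" unfolding w_def using \<delta>_pos by simp
  have "2 * coarse_rate * growth = 12 * rdim * w"
    unfolding coarse_rate_def growth_def \<Delta>_def w_def by (simp add: algebra_simps)
  then have "sqrt (2 * coarse_rate * growth) = sqrt (12 * rdim) * sqrt w"
    by (simp only: real_sqrt_mult)
  also have "\<dots> \<le> 20 * rdim * sqrt w"
  proof (rule mult_right_mono)
    show "sqrt (12 * rdim) \<le> 20 * rdim"
      using rdim_ge_1 by (intro real_le_lsqrt) (auto simp: power2_eq_square)
  qed (simp add: w0)
  finally have "4 * sigma * sqrt (2 * coarse_rate * growth) \<le> 4 * sigma * (20 * rdim * sqrt w)"
    using sigma_pos by (intro mult_left_mono) auto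
  then show ?thesis unfolding w_def rdim_def by (simp add: mult_ac)
qed

end

lemma max_incr_eq_0_if_zero:
  assumes "\<forall>k\<in>posidx. X k \<omega> = 0"
  shows "max_incr X \<delta> n \<omega> = 0"
proof -
  have "partial_sum X m \<omega> = 0" for m
    unfolding partial_sum_eq_sum_index_box using assms index_box_subset_posidx by (auto intro!: sum.neutral)
  then have "max_incr X \<delta> n \<omega> \<le> 0" by (intro max_incr_le) auto
  then show ?thesis using max_incr_nonneg by (intro antisym)
qed

theorem lemma3p2:
  fixes M :: "'a measure" and X :: "('d::finite \<Rightarrow> nat) \<Rightarrow> 'a \<Rightarrow> real"
    and b \<delta> :: real
  assumes "prob_space M"
    and "\<And>k. k \<in> posidx \<Longrightarrow> X k \<in> borel_measurable M"
    and "neg_assoc M X posidx"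
    and "\<And>k. k \<in> posidx \<Longrightarrow> (LINT \<omega>|M. X k \<omega>) = 0"
    and "0 < b"
    and "\<And>k. k \<in> posidx \<Longrightarrow> (AE \<omega> in M. \<bar>X k \<omega>\<bar> \<le> b)"
    and "0 < \<delta>"
  shows "AE \<omega> in M.
     Limsup multi_at_top
       (\<lambda>n. ereal (max_incr X \<delta> n \<omega> /
          sqrt (2 * real CARD('d) * real (\<Prod>i\<in>UNIV. n i) * Lg (Lg (real (\<Prod>i\<in>UNIV. n i))))))
     \<le> ereal (80 * real CARD('d) * sqrt (\<delta> * (1 + 2 * \<delta>) ^ CARD('d))
          * (SUP k\<in>posidx. sqrt (LINT \<omega>|M. (X k \<omega>)\<^sup>2)))"
proof -
  interpret centered_bounded_NA M X posidx b
    using assms(1-6) by (intro centered_bounded_NA.intro centered_bounded_NA_axioms.intro) auto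
  have sigma: "(SUP k\<in>posidx. sqrt (LINT \<omega>|M. (X k \<omega>)\<^sup>2)) = sigma"
    by (simp add: sigma_def)
  have "(\<lambda>_. 1) \<in> (posidx :: ('d \<Rightarrow> nat) set)" by (simp add: posidx_def)
  then consider "sigma = 0" | "0 < sigma" using sigma_nonneg by fastforce
  then show ?thesis
  proof cases
    case 1
    have "AE \<omega> in M. \<forall>k\<in>posidx. X k \<omega> = 0" by (rule AE_X_zero_if_sigma_zero) (simp_all add: 1)
    then show ?thesis unfolding sigma 1
      by eventually_elim (intro Limsup_bounded, simp add: max_incr_eq_0_if_zero)
  next
    case 2
    interpret NA_increments M X b \<delta> by unfold_locales (use assms(7) 2 in auto)
    show ?thesis unfolding sigma using AE_limsup_le
      by eventually_elim (use limsup_const_le in \<open>auto intro: order_trans\<close>)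
  qed
qed

end
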